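(* Consider the stochastic energy exchange model, its time-$h$ sampling chain, and the set $\mathfrak{C}$ described in the context; let $\hat V=\max\{1,V\}$, $\hat W=\max\{1,W\}$, $\hat\alpha=2-2\eta$, and $\tau_{\mathfrak{C}}=\inf\{n>0:\mathbf{E}_{nh}\in\mathfrak{C}\}$. For any $\epsilon>0$ there exists a constant $C_6<\infty$ such that $$\mathbb{P}_{\mathbf{E}}[\tau_{\mathfrak{C}}>n]\le C_6\big(\hat W(\mathbf{E})+\hat V(\mathbf{E})\big)n^{-(\hat\alpha-\epsilon)}$$ for all $\mathbf{E}\in\mathbb{R}^N_+$ and all $n\ge1$.
   Context: Fix $N\ge1$, $T_L,T_R>0$, a sufficiently large $K$ ($K\gg T_L,T_R$) and $R(a,b)=\min\{K,\sqrt{\min(a,b)}\}$. The stochastic energy exchange model is the Markov jump process $\mathbf{E}_t=(E_1(t),\dots,E_N(t))$ on $\mathbb{R}^N_+$: for $i=1,\dots,N-1$ a clock of rate $R(E_i,E_{i+1})$ on sites $i,i+1$; when it rings $(E_i,E_{i+1})\mapsto(p(E_i+E_{i+1}),(1-p)(E_i+E_{i+1}))$, $p$ uniform on $(0,1)$; a clock of rate $R(T_L,E_1)$ (resp. $R(E_N,T_R)$) with $E_1\mapsto p(E_1+X_L)$ (resp. $E_N\mapsto p(E_N+X_R)$), $X_L,X_R$ exponential with means $T_L,T_R$; all independent. $P^t$ is its transition kernel. Let $W(\mathbf{E})=\sum_iE_i$, $a_m=1-\frac{2^{m-1}-1}{2^N-1}$, and $V(\mathbf{E})=\sum_{m=1}^N\sum_{k=1}^{N-m+1}\big(\sum_{j=0}^{m-1}E_{k+j}\big)^{a_m\eta-1}$.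 Fix sufficiently small $\eta>0$ and $h>0$; $M_0>1$ is a constant such that $P^hV-V\le-c_0V^{\alpha}$ on $\{V>M_0\}$ ($c_0>0$, $\alpha=1-\frac1{2(1-\eta)}$); with $G=\{V\le M_0\}$, return times $T_0=0$, $T_{n+1}=\inf\{k>T_n:\mathbf{E}_{kh}\in G\}$ and induced kernel $\hat PW(\mathbf{E})=\mathbb{E}_{\mathbf{E}}[W(\mathbf{E}_{T_1h})]$, $M_1>1$ is a constant such that $\hat PW\le(1-\delta)W$ on $G\cap\{W>M_1\}$ for some $\delta>0$. $\mathfrak{C}=\{\mathbf{E}:V(\mathbf{E})\le M_0,\ W(\mathbf{E})\le M_1\}$. *)

theory Defs
  imports "HOL-Probability.Probability"
begin

text \<open>States: functions nat => real, only the coordinates 1..N are meaningful.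
 The transition semigroup P^t of the bounded-rate jump process is represented as a
 positive operator on nonnegative functions (ennreal-valued), built by uniformization
 with the uniform rate bound Lambda = (N+1) K.\<close>

type_synonym state = "nat \<Rightarrow> real"

definition inOrth :: "nat \<Rightarrow> state \<Rightarrow> bool" where
  "inOrth N E \<longleftrightarrow> (\<forall>i\<in>{1..N}. E i > 0)"

definition Rate :: "real \<Rightarrow> real \<Rightarrow> real \<Rightarrow> real" where
  "Rate K a b = min K (sqrt (min a b))"

definition unifP :: "real measure" where
  "unifP = uniform_measure lborel {0<..<1}"

definition expo :: "real \<Rightarrow> real measure" where
  "expo T = density lborel (\<lambda>x. ennreal (exponential_density (1 / T) x))"

definition Lam :: "nat \<Rightarrow> real \<Rightarrow> real" where
  "Lam N K = real (N + 1) * K"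

definition totalRate :: "nat \<Rightarrow> real \<Rightarrow> real \<Rightarrow> real \<Rightarrow> state \<Rightarrow> real" where
  "totalRate N TL TR K E =
     (\<Sum>i=1..<N. Rate K (E i) (E (i+1))) + Rate K TL (E 1) + Rate K (E N) TR"

definition Qop :: "nat \<Rightarrow> real \<Rightarrow> real \<Rightarrow> real \<Rightarrow> (state \<Rightarrow> ennreal) \<Rightarrow> state \<Rightarrow> ennreal" where
  "Qop N TL TR K f E =
     (\<Sum>i=1..<N. ennreal (Rate K (E i) (E (i+1)) / Lam N K) *
        (\<integral>\<^sup>+ p. f (E(i := p * (E i + E (i+1)), i+1 := (1 - p) * (E i + E (i+1)))) \<partial>unifP))
   + ennreal (Rate K TL (E 1) / Lam N K) *
        (\<integral>\<^sup>+ p. (\<integral>\<^sup>+ x. f (E(1 := p * (E 1 + x))) \<partial>expo TL) \<partial>unifP)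
   + ennreal (Rate K (E N) TR / Lam N K) *
        (\<integral>\<^sup>+ p. (\<integral>\<^sup>+ x. f (E(N := p * (E N + x))) \<partial>expo TR) \<partial>unifP)
   + ennreal (1 - totalRate N TL TR K E / Lam N K) * f E"

definition Pt :: "nat \<Rightarrow> real \<Rightarrow> real \<Rightarrow> real \<Rightarrow> real \<Rightarrow> (state \<Rightarrow> ennreal) \<Rightarrow> state \<Rightarrow> ennreal" where
  "Pt N TL TR K t f E =
     (\<Sum>k. ennreal (exp (- Lam N K * t) * (Lam N K * t) ^ k / fact k) * ((Qop N TL TR K ^^ k) f) E)"

definition Wf :: "nat \<Rightarrow> state \<Rightarrow> real" where
  "Wf N E = (\<Sum>i=1..N. E i)"

definition aexp :: "nat \<Rightarrow> nat \<Rightarrow> real" where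
  "aexp N m = 1 - (2 ^ (m - 1) - 1) / (2 ^ N - 1)"

definition Vf :: "nat \<Rightarrow> real \<Rightarrow> state \<Rightarrow> real" where
  "Vf N \<eta> E = (\<Sum>m=1..N. \<Sum>k=1..N-m+1. (\<Sum>j=0..m-1. E (k+j)) powr (aexp N m * \<eta> - 1))"

text \<open>hitG f k E = E_E[f(E_{kh}); T_1 = k] for the return time T_1 to G (k >= 1).\<close>
fun hitG :: "nat \<Rightarrow> real \<Rightarrow> real \<Rightarrow> real \<Rightarrow> real \<Rightarrow> state set \<Rightarrow> (state \<Rightarrow> ennreal) \<Rightarrow> nat \<Rightarrow> state \<Rightarrow> ennreal" where
  "hitG N TL TR K h G f 0 = (\<lambda>E. 0)"
| "hitG N TL TR K h G f (Suc 0) = Pt N TL TR K h (\<lambda>y. indicator G y * f y)"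
| "hitG N TL TR K h G f (Suc (Suc k)) =
     Pt N TL TR K h (\<lambda>y. indicator (- G) y * hitG N TL TR K h G f (Suc k) y)"

text \<open>Induced kernel: hatP f (E) = E_E[f(E_{T_1 h})].\<close>
definition hatP :: "nat \<Rightarrow> real \<Rightarrow> real \<Rightarrow> real \<Rightarrow> real \<Rightarrow> state set \<Rightarrow> (state \<Rightarrow> ennreal) \<Rightarrow> state \<Rightarrow> ennreal" where
  "hatP N TL TR K h G f E = (\<Sum>k. hitG N TL TR K h G f k E)"

text \<open>survP n E = P_E[tau_C > n], tau_C = inf {n > 0. E_{nh} in C}.\<close>
fun survP :: "nat \<Rightarrow> real \<Rightarrow> real \<Rightarrow> real \<Rightarrow> real \<Rightarrow> state set \<Rightarrow> nat \<Rightarrow> state \<Rightarrow> ennreal" where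
  "survP N TL TR K h C 0 = (\<lambda>E. 1)"
| "survP N TL TR K h C (Suc n) =
     Pt N TL TR K h (\<lambda>y. indicator (- C) y * survP N TL TR K h C n y)"

end

theory Submission
  imports Defs
begin

text \<open>
  The return time to \<open>G = {V \<le> M0}\<close> has polynomial tails: the drift
  \<open>P V \<le> V - c0 V\<^bsup>1 - 1/g\<^esup>\<close> with \<open>g = 2 - 2\<eta>\<close> gives
  \<open>P\<^sub>x[\<tau>\<^sub>G > m] \<lesssim> V(x) m\<^sup>-\<^sup>g\<close> by induction on \<open>m\<close>.
  A path that has not yet hit \<open>C = G \<inter> {W \<le> M1}\<close> at time \<open>n\<close> is decomposed at its first
  entrance into \<open>G\<close>. If that entrance does not happen before time \<open>\<theta> n\<close>, the tail of
  \<open>\<tau>\<^sub>G\<close> gives the bound \<open>V(x) n\<^sup>-\<^sup>g\<close>. Otherwise the chain enters \<open>G\<close> outside \<open>C\<close> at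
  some time \<open>j < \<theta> n\<close>, still has at least \<open>(1 - \<theta>) n\<close> steps to survive, and by induction
  on \<open>n\<close> this costs \<open>\<lesssim> W(X\<^sub>j) ((1 - \<theta>) n)\<^sup>-\<^sup>g\<close>; the contraction
  \<open>E\<^sub>x[W(X\<^sub>\<tau>\<^sub>G)] \<le> (1 - \<delta>) W(x)\<close> of the induced chain absorbs the factor \<open>(1 - \<theta>)\<^sup>-\<^sup>g\<close>.
  The energy exchange model enters only through its sub-Markov transition operator and the
  crude bounds \<open>P\<^sup>h V \<le> A V\<close> and \<open>P\<^sup>h W \<le> W + b\<close>; the rate obtained is \<open>n\<^sup>-\<^sup>g\<close> itself.
\<close>

section \<open>Killed iterates of a sub-Markov operator\<close>

text \<open>For a transition operator \<open>P\<close>, \<open>avoiding P A f n x = E\<^sub>x[f(X\<^sub>n); X\<^sub>1, \<dots>, X\<^sub>n \<notin> A]\<close> and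
  \<open>entrance P G f k x = E\<^sub>x[f(X\<^sub>k); X\<^sub>1, \<dots>, X\<^sub>k\<^sub>-\<^sub>1 \<notin> G, X\<^sub>k \<in> G]\<close>.\<close>

primrec avoiding :: "(('a \<Rightarrow> ennreal) \<Rightarrow> 'a \<Rightarrow> ennreal) \<Rightarrow> 'a set \<Rightarrow> ('a \<Rightarrow> ennreal) \<Rightarrow> nat \<Rightarrow> 'a \<Rightarrow> ennreal" where
  "avoiding P A f 0 = f"
| "avoiding P A f (Suc n) = P (\<lambda>y. indicator (- A) y * avoiding P A f n y)"

abbreviation survival :: "(('a \<Rightarrow> ennreal) \<Rightarrow> 'a \<Rightarrow> ennreal) \<Rightarrow> 'a set \<Rightarrow> nat \<Rightarrow> 'a \<Rightarrow> ennreal" where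
  "survival P A n \<equiv> avoiding P A (\<lambda>_. 1) n"

fun entrance :: "(('a \<Rightarrow> ennreal) \<Rightarrow> 'a \<Rightarrow> ennreal) \<Rightarrow> 'a set \<Rightarrow> ('a \<Rightarrow> ennreal) \<Rightarrow> nat \<Rightarrow> 'a \<Rightarrow> ennreal" where
  "entrance P G f 0 = (\<lambda>_. 0)"
| "entrance P G f (Suc 0) = P (\<lambda>y. indicator G y * f y)"
| "entrance P G f (Suc (Suc k)) = P (\<lambda>y. indicator (- G) y * entrance P G f (Suc k) y)"

locale sub_markov_operator =
  fixes M :: "'a measure" and P :: "('a \<Rightarrow> ennreal) \<Rightarrow> 'a \<Rightarrow> ennreal" and \<Omega> :: "'a set"
  assumes space_M: "space M = UNIV"
    and measurable_P: "f \<in> borel_measurable M \<Longrightarrow> P f \<in> borel_measurable M"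
    and P_add: "f \<in> borel_measurable M \<Longrightarrow> g \<in> borel_measurable M \<Longrightarrow> P (\<lambda>x. f x + g x) x = P f x + P g x"
    and P_cmult: "f \<in> borel_measurable M \<Longrightarrow> P (\<lambda>x. c * f x) x = c * P f x"
    and P_mono: "x \<in> \<Omega> \<Longrightarrow> (\<And>z. z \<in> \<Omega> \<Longrightarrow> f z \<le> g z) \<Longrightarrow> P f x \<le> P g x"
    and P_one: "x \<in> \<Omega> \<Longrightarrow> P (\<lambda>_. 1) x \<le> 1"
begin

lemma P_zero: "P (\<lambda>_. 0) x = 0"
  using P_cmult[of "\<lambda>_. 0" 0 x] by simp

lemma P_sum:
  assumes "finite I" "\<And>i. i \<in> I \<Longrightarrow> f i \<in> borel_measurable M"
  shows "P (\<lambda>x. \<Sum>i\<in>I. f i x) x = (\<Sum>i\<in>I. P (f i) x)"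
  using assms
proof (induction I rule: finite_induct)
  case (insert a I)
  have "P (\<lambda>x. f a x + (\<Sum>i\<in>I. f i x)) x = P (f a) x + P (\<lambda>x. \<Sum>i\<in>I. f i x) x"
    using insert by (intro P_add) auto
  then show ?case using insert by simp
qed (simp add: P_zero)

lemma Compl_in_sets: "A \<in> sets M \<Longrightarrow> - A \<in> sets M"
  using sets.compl_sets[of A M] by (simp add: Compl_eq_Diff_UNIV space_M)

lemma measurable_indicator_Compl[measurable]:
  "A \<in> sets M \<Longrightarrow> (\<lambda>y. indicator (- A) y :: ennreal) \<in> borel_measurable M"
  by (intro borel_measurable_indicator Compl_in_sets)

lemma measurable_avoiding[measurable]:
  "A \<in> sets M \<Longrightarrow> f \<in> borel_measurable M \<Longrightarrow> avoiding P A f n \<in> borel_measurable M"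
  by (induction n) (auto intro!: measurable_P borel_measurable_times_ennreal measurable_indicator_Compl)

lemma measurable_entrance[measurable]:
  "G \<in> sets M \<Longrightarrow> f \<in> borel_measurable M \<Longrightarrow> entrance P G f k \<in> borel_measurable M"
proof (induction k)
  case (Suc k)
  then show ?case
    by (cases k) (auto intro!: measurable_P borel_measurable_times_ennreal measurable_indicator_Compl)
qed simp

lemma survival_le_1: "x \<in> \<Omega> \<Longrightarrow> survival P A n x \<le> 1"
proof (induction n arbitrary: x)
  case (Suc n)
  have "survival P A (Suc n) x \<le> P (\<lambda>_. 1) x"
    using Suc by (simp, intro P_mono) (auto simp: indicator_def)
  then show ?case using P_one[OF Suc.prems] by simp
qed simp

lemma entrance_mono:
  "x \<in> \<Omega> \<Longrightarrow> (\<And>z. z \<in> \<Omega> \<Longrightarrow> z \<in> G \<Longrightarrow> f z \<le> g z) \<Longrightarrow> entrance P G f k x \<le> entrance P G g k x"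
proof (induction k arbitrary: x)
  case (Suc k)
  then show ?case
    by (cases k) (simp_all, (intro P_mono; auto simp: indicator_def intro: mult_left_mono)+)
qed simp

lemma entrance_cmult:
  assumes G: "G \<in> sets M" and f: "f \<in> borel_measurable M"
  shows "entrance P G (\<lambda>x. c * f x) k x = c * entrance P G f k x"
proof (induction k arbitrary: x)
  case (Suc k)
  note [measurable] = G f
  show ?case
  proof (cases k)
    case 0
    have "P (\<lambda>y. indicator G y * (c * f y)) x = P (\<lambda>y. c * (indicator G y * f y)) x"
      by (simp add: mult.left_commute)
    also have "\<dots> = c * P (\<lambda>y. indicator G y * f y) x"
      by (intro P_cmult) measurable
    finally show ?thesis using 0 by simp
  next
    case (Suc k')
    have "P (\<lambda>y. indicator (- G) y * entrance P G (\<lambda>x. c * f x) k y) x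
        = P (\<lambda>y. c * (indicator (- G) y * entrance P G f k y)) x"
      using Suc.IH by (simp add: mult.left_commute)
    also have "\<dots> = c * P (\<lambda>y. indicator (- G) y * entrance P G f k y) x"
      by (intro P_cmult) measurable
    finally show ?thesis using Suc by simp
  qed
qed simp

lemma P_split_indicator:
  assumes G: "G \<in> sets M" and [measurable]: "a \<in> borel_measurable M" "b \<in> borel_measurable M"
    and c: "\<And>j. c j \<in> borel_measurable M"
  shows "P (\<lambda>y. indicator G y * a y + indicator (- G) y * (b y + (\<Sum>j<(J::nat). c j y))) x
       = P (\<lambda>y. indicator G y * a y) x + P (\<lambda>y. indicator (- G) y * b y) x
         + (\<Sum>j<J. P (\<lambda>y. indicator (- G) y * c j y) x)"
proof -
  note [measurable] = c G
  have cJ[measurable]: "(\<lambda>y. \<Sum>j<J. indicator (- G) y * c j y) \<in> borel_measurable M"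
    by measurable
  have "P (\<lambda>y. indicator G y * a y + indicator (- G) y * (b y + (\<Sum>j<J. c j y))) x
      = P (\<lambda>y. indicator G y * a y + (indicator (- G) y * b y + (\<Sum>j<J. indicator (- G) y * c j y))) x"
    by (simp add: distrib_left sum_distrib_left)
  also have "\<dots> = P (\<lambda>y. indicator G y * a y) x
      + (P (\<lambda>y. indicator (- G) y * b y) x + P (\<lambda>y. \<Sum>j<J. indicator (- G) y * c j y) x)"
    by (subst P_add, measurable, subst P_add, measurable)
  also have "P (\<lambda>y. \<Sum>j<J. indicator (- G) y * c j y) x = (\<Sum>j<J. P (\<lambda>y. indicator (- G) y * c j y) x)"
    by (rule P_sum) (auto intro: borel_measurable_times_ennreal measurable_indicator_Compl[OF G] c)
  finally show ?thesis by (simp add: add.assoc)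
qed

lemma survival_entrance_decomposition:
  assumes G: "G \<in> sets M" and C: "C \<in> sets M" and CG: "C \<subseteq> G"
  shows "survival P C n x = survival P G n x
           + (\<Sum>j<n. entrance P G (\<lambda>y. indicator (- C) y * survival P C (n - Suc j) y) (Suc j) x)"
proof (induction n arbitrary: x)
  case (Suc n)
  define g where "g m y = indicator (- C) y * survival P C m y" for m y
  have [measurable]: "g m \<in> borel_measurable M" for m
    unfolding g_def using C by measurable
  have IH: "survival P C n y = survival P G n y + (\<Sum>j<n. entrance P G (g (n - Suc j)) (Suc j) y)" for y
    using Suc.IH unfolding g_def by simp
  have "survival P C (Suc n) x = P (g n) x"
    unfolding g_def by simp
  also have "\<dots> = P (\<lambda>y. indicator G y * g n y + indicator (- G) y *
      (survival P G n y + (\<Sum>j<n. entrance P G (g (n - Suc j)) (Suc j) y))) x"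
    using CG by (intro arg_cong[where f = "\<lambda>f. P f x"] ext)
      (auto simp: g_def[of n] IH indicator_def)
  also have "\<dots> = entrance P G (g n) 1 x + survival P G (Suc n) x
      + (\<Sum>j<n. entrance P G (g (Suc n - Suc (Suc j))) (Suc (Suc j)) x)"
    using G by (subst P_split_indicator) auto
  also have "\<dots> = survival P G (Suc n) x + (\<Sum>j<Suc n. entrance P G (g (Suc n - Suc j)) (Suc j) x)"
    by (subst sum.lessThan_Suc_shift) (simp add: algebra_simps)
  finally show ?case unfolding g_def .
qed simp

lemma entrance_sum_drift:
  assumes G: "G \<in> sets M" and [measurable]: "W \<in> borel_measurable M"
    and PW: "\<And>x. x \<in> \<Omega> \<Longrightarrow> P W x \<le> W x + b" and x: "x \<in> \<Omega>"
  shows "(\<Sum>j<J. entrance P G W (Suc j) x) + avoiding P G W J x \<le> W x + b * (\<Sum>j<J. survival P G j x)"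
  using x
proof (induction J arbitrary: x)
  case (Suc J)
  note [measurable] = G
  have "(\<Sum>j<Suc J. entrance P G W (Suc j) x) + avoiding P G W (Suc J) x
      = P (\<lambda>y. indicator G y * W y + indicator (- G) y *
          (avoiding P G W J y + (\<Sum>j<J. entrance P G W (Suc j) y))) x"
    by (subst P_split_indicator) (measurable, simp only: sum.lessThan_Suc_shift, simp add: add_ac)
  also have "\<dots> \<le> P (\<lambda>y. W y + b * (\<Sum>j<J. indicator (- G) y * survival P G j y)) x"
    using Suc.IH by (intro P_mono[OF Suc.prems])
      (auto simp: indicator_def add.commute)
  also have "\<dots> = P W x + b * (\<Sum>j<J. survival P G (Suc j) x)"
    by (subst P_add, measurable, subst P_cmult, measurable, subst P_sum) auto
  also have "\<dots> \<le> (W x + b) + b * (\<Sum>j<J. survival P G (Suc j) x)"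
    by (rule add_right_mono[OF PW[OF Suc.prems]])
  also have "\<dots> = W x + b * (\<Sum>j<Suc J. survival P G j x)"
    by (simp only: sum.lessThan_Suc_shift avoiding.simps(1) distrib_left mult_1_right add.assoc)
  finally show ?case .
qed simp

lemma entrance_sum_le_1:
  "G \<in> sets M \<Longrightarrow> x \<in> \<Omega> \<Longrightarrow> (\<Sum>j<J. entrance P G (\<lambda>_. 1) (Suc j) x) \<le> 1"
  using entrance_sum_drift[of G "\<lambda>_. 1" 0 x J] P_one by (auto intro: order_trans[rotated])

lemma entrance_sum_le_survival:
  assumes G: "G \<in> sets M" and x: "x \<in> \<Omega>"
  shows "(\<Sum>j<J. entrance P G (\<lambda>_. 1) (Suc (m + j)) x) \<le> survival P G m x"
  using x
proof (induction m arbitrary: x)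
  case (Suc m)
  note [measurable] = G
  have "(\<Sum>j<J. entrance P G (\<lambda>_. 1) (Suc (Suc m + j)) x)
      = P (\<lambda>y. \<Sum>j<J. indicator (- G) y * entrance P G (\<lambda>_. 1) (Suc (m + j)) y) x"
    by (subst P_sum) auto
  also have "\<dots> \<le> P (\<lambda>y. indicator (- G) y * survival P G m y) x"
    using Suc.IH by (intro P_mono[OF Suc.prems])
      (auto simp: sum_distrib_left[symmetric] intro: mult_left_mono)
  finally show ?case by simp
qed (simp add: entrance_sum_le_1 G)

end

section \<open>Polynomial tail of the return time to a level set\<close>

lemma powr_add_one_diff_le:
  fixes m g :: real
  assumes "0 < m" "1 \<le> g"
  shows "(m + 1) powr g - m powr g \<le> g * (m + 1) powr (g - 1)"
proof -
  have "\<exists>z. m < z \<and> z < m + 1 \<and> (m + 1) powr g - m powr g = (m + 1 - m) * (g * z powr (g - 1))"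
    using assms by (intro MVT2) (auto intro!: has_real_derivative_powr)
  then obtain z where z: "m < z" "z < m + 1" and e: "(m + 1) powr g - m powr g = g * z powr (g - 1)"
    by auto
  have "z powr (g - 1) \<le> (m + 1) powr (g - 1)"
    using z assms by (intro powr_mono2) auto
  then show ?thesis unfolding e using assms by simp
qed

lemma drift_pays_for_decay:
  fixes g c0 v r m :: real
  assumes g: "1 \<le> g" and c0: "0 < c0" and v: "0 < v" and m: "0 < m"
    and drift: "r + c0 * v powr (1 - 1 / g) \<le> v"
    and small: "(g / c0) powr g * v < (m + 1) powr g"
  shows "r * (m + 1) powr g \<le> v * m powr g"
proof -
  define M where "M = m + 1"
  have M: "M > 0" using m by (simp add: M_def)
  have "v < M powr g / (g / c0) powr g"
    using small g c0 by (simp add: M_def field_simps)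
  also have "\<dots> = (M * c0 / g) powr g"
    using M g c0 by (simp add: powr_divide powr_mult)
  finally have "v powr (1 / g) < ((M * c0 / g) powr g) powr (1 / g)"
    using v g by (intro powr_less_mono2) auto
  also have "\<dots> = M * c0 / g"
    using M c0 g by (simp add: powr_powr)
  finally have v1: "g * v powr (1 / g) < M * c0"
    using g by (simp add: field_simps)
  have "g * v = v powr (1 - 1 / g) * (g * v powr (1 / g))"
    using v by (simp add: powr_add[symmetric] algebra_simps)
  also have "\<dots> \<le> v powr (1 - 1 / g) * (M * c0)"
    using v1 by (intro mult_left_mono) auto
  finally have gv: "g * v \<le> c0 * v powr (1 - 1 / g) * M"
    by (simp add: algebra_simps)
  have "v * (M powr g - m powr g) \<le> v * (g * M powr (g - 1))"
    unfolding M_def using m g v by (intro mult_left_mono powr_add_one_diff_le) auto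
  also have "\<dots> \<le> (c0 * v powr (1 - 1 / g) * M) * M powr (g - 1)"
    using mult_right_mono[OF gv, of "M powr (g - 1)"] M by (simp add: ac_simps)
  also have "\<dots> = c0 * v powr (1 - 1 / g) * M powr g"
    using M by (simp add: powr_add[symmetric] mult.assoc powr_mult_base)
  finally have "(v - c0 * v powr (1 - 1 / g)) * M powr g \<le> v * m powr g"
    by (simp add: algebra_simps)
  moreover have "r * M powr g \<le> (v - c0 * v powr (1 - 1 / g)) * M powr g"
    using drift by (intro mult_right_mono) auto
  ultimately show ?thesis unfolding M_def by linarith
qed

lemma powr_minus_le_two_powr:
  fixes m g :: real
  assumes "1 \<le> m" "0 \<le> g"
  shows "m powr (- g) \<le> 2 powr g * (m + 1) powr (- g)"
proof -
  have "(m + 1) powr g \<le> (2 * m) powr g"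
    using assms by (intro powr_mono2) auto
  then have "(m + 1) powr g \<le> 2 powr g * m powr g"
    using assms by (simp add: powr_mult)
  then show ?thesis
    using assms by (simp add: powr_minus field_simps)
qed

locale subgeometric_drift = sub_markov_operator +
  fixes V :: "'a \<Rightarrow> real" and M0 c0 g AV :: real
  assumes measurable_V[measurable]: "V \<in> borel_measurable M"
    and V_nonneg: "\<And>x. 0 \<le> V x"
    and M0: "1 \<le> M0" and c0: "0 < c0" and g: "1 \<le> g" and AV: "0 \<le> AV"
    and drift_V: "\<And>x. x \<in> \<Omega> \<Longrightarrow> M0 < V x \<Longrightarrow>
       P (\<lambda>y. ennreal (V y)) x + ennreal (c0 * V x powr (1 - 1 / g)) \<le> ennreal (V x)"
    and P_V_le: "\<And>x. x \<in> \<Omega> \<Longrightarrow> P (\<lambda>y. ennreal (V y)) x \<le> ennreal (AV * V x)"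
begin

abbreviation G :: "'a set" where "G \<equiv> {x. V x \<le> M0}"

lemma G_in_sets[measurable]: "G \<in> sets M"
proof -
  have "{x \<in> space M. V x \<le> M0} \<in> sets M" by measurable
  then show ?thesis by (simp add: space_M)
qed

text \<open>The factor \<open>(g / c0)\<^sup>g\<close> is what makes \<open>drift_pays_for_decay\<close> applicable outside \<open>G\<close>.\<close>

definition tail_const :: real where
  "tail_const = max 1 ((g / c0) powr g)"

definition level_const :: real where
  "level_const = max 1 (2 powr g * AV * M0)"

text \<open>Inside \<open>G\<close> the function \<open>V\<close> is replaced by a constant large enough to absorb the
  single step out of \<open>G\<close>.\<close>

definition Vplus :: "'a \<Rightarrow> real" where
  "Vplus x = (if V x \<le> M0 then level_const else V x)"

definition tail_bound :: "nat \<Rightarrow> 'a \<Rightarrow> real" where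
  "tail_bound m x = min 1 (tail_const * Vplus x * real m powr (- g))"

lemma tail_const_ge: "1 \<le> tail_const" "(g / c0) powr g \<le> tail_const"
  unfolding tail_const_def by auto

lemma level_const_ge: "1 \<le> level_const" "2 powr g * AV * M0 \<le> level_const"
  unfolding level_const_def by auto

lemma Vplus_ge_1: "1 \<le> Vplus x"
  using level_const_ge M0 unfolding Vplus_def by auto

lemma Vplus_le: "Vplus x \<le> level_const * max 1 (V x)"
  using level_const_ge M0 unfolding Vplus_def
  by (auto simp: max_def intro: order_trans[OF _ mult_left_mono[of 1]])

lemma tail_const_Vplus_ge_1: "1 \<le> tail_const * Vplus x"
  using mult_mono[of 1 tail_const 1 "Vplus x"] tail_const_ge(1) Vplus_ge_1[of x] by simp

lemma P_tail_bound_le_P_V: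
  assumes x: "x \<in> \<Omega>"
  shows "P (\<lambda>y. indicator (- G) y * ennreal (tail_bound m y)) x
       \<le> ennreal (tail_const * real m powr (- g)) * P (\<lambda>y. ennreal (V y)) x"
proof -
  have "P (\<lambda>y. indicator (- G) y * ennreal (tail_bound m y)) x
      \<le> P (\<lambda>y. ennreal (tail_const * real m powr (- g)) * ennreal (V y)) x"
  proof (rule P_mono[OF x])
    fix z
    have "z \<notin> G \<Longrightarrow> tail_bound m z \<le> tail_const * real m powr (- g) * V z"
      unfolding tail_bound_def Vplus_def by (simp add: algebra_simps)
    then show "indicator (- G) z * ennreal (tail_bound m z) \<le> ennreal (tail_const * real m powr (- g)) * ennreal (V z)"
      using tail_const_ge V_nonneg[of z]
      by (cases "z \<in> G") (auto simp: ennreal_mult[symmetric] intro!: ennreal_leI)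
  qed
  also have "\<dots> = ennreal (tail_const * real m powr (- g)) * P (\<lambda>y. ennreal (V y)) x"
    by (rule P_cmult) measurable
  finally show ?thesis .
qed

lemma tail_step_in_G:
  assumes x: "x \<in> \<Omega>" "x \<in> G" and m: "1 \<le> m"
  shows "P (\<lambda>y. indicator (- G) y * ennreal (tail_bound m y)) x
       \<le> ennreal (tail_const * Vplus x * real (Suc m) powr (- g))"
proof -
  have "P (\<lambda>y. ennreal (V y)) x \<le> ennreal (AV * V x)"
    by (rule P_V_le[OF x(1)])
  also have "\<dots> \<le> ennreal (AV * M0)"
    using x(2) AV by (intro ennreal_leI mult_left_mono) auto
  finally have "P (\<lambda>y. ennreal (V y)) x \<le> ennreal (AV * M0)" .
  then have "P (\<lambda>y. indicator (- G) y * ennreal (tail_bound m y)) x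
      \<le> ennreal (tail_const * real m powr (- g)) * ennreal (AV * M0)"
    using P_tail_bound_le_P_V[OF x(1)] by (meson order_trans mult_left_mono zero_le)
  also have "\<dots> = ennreal (tail_const * (AV * M0) * real m powr (- g))"
    using tail_const_ge AV M0 by (simp add: ennreal_mult[symmetric] ac_simps)
  also have "\<dots> \<le> ennreal (tail_const * (2 powr g * AV * M0) * real (Suc m) powr (- g))"
    using powr_minus_le_two_powr[of "real m" g] m g tail_const_ge AV M0
    by (intro ennreal_leI) (simp add: mult_left_mono ac_simps)
  also have "\<dots> \<le> ennreal (tail_const * Vplus x * real (Suc m) powr (- g))"
    using x(2) level_const_ge tail_const_ge unfolding Vplus_def
    by (intro ennreal_leI mult_right_mono mult_left_mono) auto
  finally show ?thesis .
qed

lemma tail_step_outside_G: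
  assumes x: "x \<in> \<Omega>" "M0 < V x" and m: "1 \<le> m"
    and small: "tail_const * V x * real (Suc m) powr (- g) < 1"
  shows "P (\<lambda>y. indicator (- G) y * ennreal (tail_bound m y)) x
       \<le> ennreal (tail_const * Vplus x * real (Suc m) powr (- g))"
proof -
  have d: "P (\<lambda>y. ennreal (V y)) x + ennreal (c0 * V x powr (1 - 1 / g)) \<le> ennreal (V x)"
    by (rule drift_V[OF x])
  then have "P (\<lambda>y. ennreal (V y)) x \<le> ennreal (V x)"
    by (metis add_increasing2 zero_le order_trans le_iff_add)
  then obtain r where r: "P (\<lambda>y. ennreal (V y)) x = ennreal r" "0 \<le> r"
    using le_ennreal_iff[of "V x"] V_nonneg[of x] by auto
  have rd: "r + c0 * V x powr (1 - 1 / g) \<le> V x"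
    using d r c0 V_nonneg[of x] by (simp add: ennreal_plus[symmetric] del: ennreal_plus)
  have "(g / c0) powr g * V x < (real m + 1) powr g"
  proof -
    have "(g / c0) powr g * V x \<le> tail_const * V x"
      using tail_const_ge V_nonneg[of x] by (intro mult_right_mono) auto
    also have "\<dots> < real (Suc m) powr g"
      using small by (simp add: powr_minus field_simps)
    finally show ?thesis by (simp add: add.commute)
  qed
  then have "r * (real m + 1) powr g \<le> V x * real m powr g"
    using g c0 M0 x m rd by (intro drift_pays_for_decay) auto
  then have decay: "tail_const * real m powr (- g) * r \<le> tail_const * V x * real (Suc m) powr (- g)"
    using m tail_const_ge by (simp add: powr_minus field_simps add.commute)
  have "P (\<lambda>y. indicator (- G) y * ennreal (tail_bound m y)) x
      \<le> ennreal (tail_const * real m powr (- g) * r)"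
    using P_tail_bound_le_P_V[OF x(1), of m] r tail_const_ge
    by (simp add: ennreal_mult[symmetric])
  also have "\<dots> \<le> ennreal (tail_const * V x * real (Suc m) powr (- g))"
    by (rule ennreal_leI[OF decay])
  finally show ?thesis
    using x(2) unfolding Vplus_def by simp
qed

lemma survival_G_tail:
  assumes "1 \<le> m" "x \<in> \<Omega>"
  shows "survival P G m x \<le> ennreal (tail_bound m x)"
  using assms
proof (induction m arbitrary: x rule: nat_induct_at_least)
  case base
  then show ?case
    using survival_le_1[of x G 1] tail_const_Vplus_ge_1[of x] by (simp add: tail_bound_def)
next
  case (Suc m)
  have step: "survival P G (Suc m) x \<le> P (\<lambda>y. indicator (- G) y * ennreal (tail_bound m y)) x"
    using Suc.IH by (simp, intro P_mono[OF Suc.prems]) (auto intro: mult_left_mono)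
  have "P (\<lambda>y. indicator (- G) y * ennreal (tail_bound m y)) x \<le> P (\<lambda>_. 1) x"
    by (rule P_mono[OF Suc.prems]) (simp add: tail_bound_def indicator_def)
  also have "\<dots> \<le> 1" by (rule P_one[OF Suc.prems])
  finally have le_1: "P (\<lambda>y. indicator (- G) y * ennreal (tail_bound m y)) x \<le> 1" .
  show ?case
  proof (cases "tail_const * Vplus x * real (Suc m) powr (- g) < 1")
    case True
    then have "P (\<lambda>y. indicator (- G) y * ennreal (tail_bound m y)) x
        \<le> ennreal (tail_const * Vplus x * real (Suc m) powr (- g))"
      using Suc.hyps tail_step_in_G[OF Suc.prems] tail_step_outside_G[OF Suc.prems]
      by (cases "x \<in> G") (auto simp: Vplus_def)
    then show ?thesis
      using True order_trans[OF step] unfolding tail_bound_def by (simp add: min_def)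
  next
    case False
    then show ?thesis
      using order_trans[OF step le_1] unfolding tail_bound_def by (simp add: min_def)
  qed
qed

end

section \<open>Polynomial tail of the hitting time of \<open>C\<close>\<close>

locale return_drift = subgeometric_drift +
  fixes W :: "'a \<Rightarrow> real" and M1 \<delta> bW :: real
  assumes measurable_W[measurable]: "W \<in> borel_measurable M"
    and W_nonneg: "\<And>x. x \<in> \<Omega> \<Longrightarrow> 0 \<le> W x"
    and M1: "1 \<le> M1" and g_gt_1: "1 < g" and g_le_2: "g \<le> 2" and \<delta>: "0 < \<delta>" and bW: "0 \<le> bW"
    and P_W_le: "\<And>x. x \<in> \<Omega> \<Longrightarrow> P (\<lambda>y. ennreal (W y)) x \<le> ennreal (W x) + ennreal bW"
    and drift_W: "\<And>x. x \<in> \<Omega> \<Longrightarrow> x \<in> G \<Longrightarrow> M1 < W x \<Longrightarrow>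
       (\<Sum>k. entrance P G (\<lambda>y. ennreal (W y)) k x) \<le> ennreal ((1 - \<delta>) * W x)"
begin

abbreviation C :: "'a set" where "C \<equiv> {x. V x \<le> M0 \<and> W x \<le> M1}"

lemma C_in_sets[measurable]: "C \<in> sets M"
proof -
  have "{x \<in> space M. V x \<le> M0 \<and> W x \<le> M1} \<in> sets M" by measurable
  then show ?thesis by (simp add: space_M)
qed

definition induced_W :: "'a \<Rightarrow> ennreal" where
  "induced_W x = (\<Sum>k. entrance P G (\<lambda>y. ennreal (W y)) k x)"

definition delta0 :: real where
  "delta0 = min \<delta> (1 / 2)"

text \<open>The contraction \<open>1 - \<delta>\<close> of the induced chain has to absorb the loss \<open>(1 - \<theta>)\<^sup>-\<^sup>g\<close>
  from the shorter remaining horizon; since \<open>g \<le> 2\<close>, \<open>\<theta> = min \<delta> (1/2) / 8\<close> suffices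
  (\<open>theta_contraction\<close>).\<close>

definition theta :: real where
  "theta = delta0 / 8"

definition inner_const :: real where
  "inner_const = 2 * tail_const * level_const * (1 + (2 / theta) powr g) / delta0"

lemma delta0: "0 < delta0" "delta0 \<le> 1 / 2" "delta0 \<le> \<delta>"
  unfolding delta0_def using \<delta> by auto

lemma theta: "0 < theta" "theta < 1"
  using delta0 unfolding theta_def by auto

lemma inner_const_nonneg: "0 \<le> inner_const"
  unfolding inner_const_def using tail_const_ge level_const_ge delta0 by auto

lemma entrance_sum_le_induced_W:
  "(\<Sum>j<J. entrance P G (\<lambda>y. ennreal (W y)) (Suc j) x) \<le> induced_W x"
proof -
  have "(\<Sum>j<J. entrance P G (\<lambda>y. ennreal (W y)) (Suc j) x)
      = (\<Sum>k<Suc J. entrance P G (\<lambda>y. ennreal (W y)) k x)"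
    by (subst sum.lessThan_Suc_shift) simp
  also have "\<dots> \<le> induced_W x"
    unfolding induced_W_def by (rule sum_le_suminf) auto
  finally show ?thesis .
qed

lemma theta_powr:
  assumes "0 < n"
  shows "(theta * real n / 2) powr (- g) = (2 / theta) powr g * real n powr (- g)"
  using assms theta by (simp add: powr_minus_divide powr_mult powr_divide)

lemma survival_G_at_theta:
  assumes x: "x \<in> \<Omega>" and n: "1 \<le> n"
  shows "survival P G (nat \<lfloor>theta * real n\<rfloor>) x
       \<le> ennreal (tail_const * Vplus x * (2 / theta) powr g * real n powr (- g))"
proof (cases "theta * real n < 1")
  case True
  then have "nat \<lfloor>theta * real n\<rfloor> = 0"
    using theta by (simp add: nat_eq_iff floor_eq_iff)
  moreover have "(theta * real n / 2) powr g \<le> 1"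
    using True theta g by (intro powr_le1) auto
  then have "1 \<le> (theta * real n / 2) powr (- g)"
    using theta n by (simp add: powr_minus_divide)
  then have one: "1 \<le> (2 / theta) powr g * real n powr (- g)"
    using n by (simp add: theta_powr)
  ultimately show ?thesis
    using mult_mono[OF tail_const_Vplus_ge_1[of x] one] tail_const_Vplus_ge_1[of x]
    by (simp add: mult.assoc)
next
  case False
  define m0 where "m0 = nat \<lfloor>theta * real n\<rfloor>"
  have fl: "1 \<le> real_of_int \<lfloor>theta * real n\<rfloor>"
    using False by simp
  moreover have "real m0 = real_of_int \<lfloor>theta * real n\<rfloor>"
    unfolding m0_def using fl by simp
  moreover have "theta * real n < real_of_int \<lfloor>theta * real n\<rfloor> + 1"
    using floor_correct[of "theta * real n"] by simp
  ultimately have m0: "1 \<le> m0" "theta * real n / 2 \<le> real m0"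
    by linarith+
  have "survival P G m0 x \<le> ennreal (tail_const * Vplus x * real m0 powr (- g))"
    by (rule order_trans[OF survival_G_tail[OF m0(1) x]]) (auto simp: tail_bound_def intro!: ennreal_leI)
  also have "\<dots> \<le> ennreal (tail_const * Vplus x * ((2 / theta) powr g * real n powr (- g)))"
    using tail_const_Vplus_ge_1[of x] m0 theta n g powr_mono2'[of "- g" "theta * real n / 2" "real m0"]
    by (intro ennreal_leI mult_left_mono) (auto simp: theta_powr)
  finally show ?thesis unfolding m0_def by (simp add: mult.assoc)
qed

lemma survival_C_after_early_entrance:
  assumes n: "1 \<le> n" and j: "j < nat \<lfloor>theta * real n\<rfloor>" and z: "z \<in> \<Omega>" "z \<in> G"
    and IH: "\<And>m y. 1 \<le> m \<Longrightarrow> m < n \<Longrightarrow> y \<in> \<Omega> \<Longrightarrow> y \<in> G \<Longrightarrow> y \<notin> C \<Longrightarrow>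
        survival P C m y \<le> ennreal (inner_const * W y * real m powr (- g))"
  shows "indicator (- C) z * survival P C (n - Suc j) z
       \<le> ennreal (inner_const * (1 - theta) powr (- g) * real n powr (- g)) * ennreal (W z)"
proof (cases "z \<in> C")
  case False
  define c where "c = inner_const * (1 - theta) powr (- g) * real n powr (- g)"
  define m where "m = n - Suc j"
  have "int j < \<lfloor>theta * real n\<rfloor>"
    using j by (simp add: zless_nat_eq_int_zless)
  then have "int j + 1 \<le> \<lfloor>theta * real n\<rfloor>"
    by linarith
  then have "real_of_int (int j + 1) \<le> theta * real n"
    by (simp only: le_floor_iff)
  then have m: "(1 - theta) * real n \<le> real m" "m < n"
    using n unfolding m_def by (auto simp: of_nat_diff algebra_simps)
  moreover have "0 < (1 - theta) * real n"
    using theta n by simp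
  ultimately have "1 \<le> m"
    by linarith
  then have "survival P C m z \<le> ennreal (inner_const * W z * real m powr (- g))"
    using IH[OF _ m(2) z] False by simp
  also have "\<dots> \<le> ennreal (c * W z)"
  proof (rule ennreal_leI)
    have "real m powr (- g) \<le> (1 - theta) powr (- g) * real n powr (- g)"
      using m theta n g powr_mono2'[of "- g" "(1 - theta) * real n" "real m"]
      by (simp add: powr_mult)
    from mult_left_mono[OF this mult_nonneg_nonneg[OF inner_const_nonneg W_nonneg[OF z(1)]]]
    show "inner_const * W z * real m powr (- g) \<le> c * W z"
      unfolding c_def by (simp add: ac_simps)
  qed
  finally show ?thesis
    using False inner_const_nonneg W_nonneg[OF z(1)] unfolding m_def c_def
    by (simp add: ennreal_mult)
qed simp

lemma early_entrances_le:
  assumes x: "x \<in> \<Omega>" and n: "1 \<le> n"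
    and IH: "\<And>m y. 1 \<le> m \<Longrightarrow> m < n \<Longrightarrow> y \<in> \<Omega> \<Longrightarrow> y \<in> G \<Longrightarrow> y \<notin> C \<Longrightarrow>
        survival P C m y \<le> ennreal (inner_const * W y * real m powr (- g))"
  shows "(\<Sum>j<nat \<lfloor>theta * real n\<rfloor>.
           entrance P G (\<lambda>y. indicator (- C) y * survival P C (n - Suc j) y) (Suc j) x)
       \<le> ennreal (inner_const * (1 - theta) powr (- g) * real n powr (- g)) * induced_W x"
proof -
  define c where "c = inner_const * (1 - theta) powr (- g) * real n powr (- g)"
  have "(\<Sum>j<nat \<lfloor>theta * real n\<rfloor>.
          entrance P G (\<lambda>y. indicator (- C) y * survival P C (n - Suc j) y) (Suc j) x)
      \<le> (\<Sum>j<nat \<lfloor>theta * real n\<rfloor>. entrance P G (\<lambda>y. ennreal c * ennreal (W y)) (Suc j) x)"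
    unfolding c_def
    by (intro sum_mono entrance_mono[OF x] survival_C_after_early_entrance[OF n _ _ _ IH]) auto
  also have "\<dots> = ennreal c * (\<Sum>j<nat \<lfloor>theta * real n\<rfloor>. entrance P G (\<lambda>y. ennreal (W y)) (Suc j) x)"
    by (simp add: entrance_cmult sum_distrib_left)
  also have "\<dots> \<le> ennreal c * induced_W x"
    by (intro mult_left_mono entrance_sum_le_induced_W) auto
  finally show ?thesis unfolding c_def .
qed

lemma sum_lessThan_add_split:
  "(\<Sum>j<m + d. f j) = (\<Sum>j<m. f j) + (\<Sum>i<d. f (m + i))" for f :: "nat \<Rightarrow> 'b::comm_monoid_add"
  by (induction d) (auto simp: add.assoc)

lemma survival_C_le:
  assumes x: "x \<in> \<Omega>" and n: "1 \<le> n"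
    and IH: "\<And>m y. 1 \<le> m \<Longrightarrow> m < n \<Longrightarrow> y \<in> \<Omega> \<Longrightarrow> y \<in> G \<Longrightarrow> y \<notin> C \<Longrightarrow>
        survival P C m y \<le> ennreal (inner_const * W y * real m powr (- g))"
  shows "survival P C n x
       \<le> ennreal (tail_const * Vplus x * (1 + (2 / theta) powr g) * real n powr (- g))
         + ennreal (inner_const * (1 - theta) powr (- g) * real n powr (- g)) * induced_W x"
proof -
  define f where "f j = entrance P G (\<lambda>y. indicator (- C) y * survival P C (n - Suc j) y) (Suc j) x" for j
  define m0 where "m0 = nat \<lfloor>theta * real n\<rfloor>"
  have "theta * real n \<le> real n"
    using theta by (simp add: mult_left_le_one_le)
  then have "\<lfloor>theta * real n\<rfloor> \<le> int n"
    by (metis floor_mono floor_of_nat)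
  then have "m0 \<le> n"
    unfolding m0_def by (simp add: nat_le_iff)
  then obtain d where nd: "n = m0 + d"
    using le_Suc_ex by blast
  have "(\<Sum>i<d. f (m0 + i)) \<le> (\<Sum>i<d. entrance P G (\<lambda>_. 1) (Suc (m0 + i)) x)"
    unfolding f_def by (intro sum_mono entrance_mono[OF x]) (auto simp: indicator_def survival_le_1)
  also have "\<dots> \<le> survival P G m0 x"
    by (rule entrance_sum_le_survival[OF G_in_sets x])
  also have "\<dots> \<le> ennreal (tail_const * Vplus x * (2 / theta) powr g * real n powr (- g))"
    unfolding m0_def by (rule survival_G_at_theta[OF x n])
  finally have late: "(\<Sum>i<d. f (m0 + i)) \<le> \<dots>" .
  have early: "(\<Sum>j<m0. f j) \<le> ennreal (inner_const * (1 - theta) powr (- g) * real n powr (- g)) * induced_W x"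
    unfolding f_def m0_def by (rule early_entrances_le[OF x n IH])
  have G_tail: "survival P G n x \<le> ennreal (tail_const * Vplus x * real n powr (- g))"
    by (rule order_trans[OF survival_G_tail[OF n x]]) (auto simp: tail_bound_def intro!: ennreal_leI)
  have "survival P C n x = survival P G n x + (\<Sum>j<n. f j)"
    unfolding f_def by (rule survival_entrance_decomposition) auto
  also have "\<dots> = survival P G n x + ((\<Sum>j<m0. f j) + (\<Sum>i<d. f (m0 + i)))"
    using sum_lessThan_add_split[of f m0 d] nd by simp
  also have "\<dots> \<le> ennreal (tail_const * Vplus x * real n powr (- g))
      + (ennreal (inner_const * (1 - theta) powr (- g) * real n powr (- g)) * induced_W x
        + ennreal (tail_const * Vplus x * (2 / theta) powr g * real n powr (- g)))"
    by (intro add_mono G_tail early late)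
  also have "\<dots> = (ennreal (tail_const * Vplus x * real n powr (- g))
        + ennreal (tail_const * Vplus x * (2 / theta) powr g * real n powr (- g)))
      + ennreal (inner_const * (1 - theta) powr (- g) * real n powr (- g)) * induced_W x"
    by (simp only: add_ac)
  also have "ennreal (tail_const * Vplus x * real n powr (- g))
        + ennreal (tail_const * Vplus x * (2 / theta) powr g * real n powr (- g))
      = ennreal (tail_const * Vplus x * (1 + (2 / theta) powr g) * real n powr (- g))"
    using tail_const_ge(1) Vplus_ge_1[of x]
    by (subst ennreal_plus[symmetric]) (auto simp: algebra_simps)
  finally show ?thesis .
qed

lemma theta_contraction: "(1 - theta) powr (- g) * (1 - delta0) \<le> 1 - delta0 / 2"
proof -
  have t: "0 < 1 - theta" "1 - theta \<le> 1" using theta by auto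
  have "1 - delta0 / 4 \<le> (1 - theta)\<^sup>2"
    unfolding theta_def by (simp add: power2_eq_square algebra_simps)
  also have "\<dots> = (1 - theta) powr 2" using t by (simp add: powr_realpow)
  also have "\<dots> \<le> (1 - theta) powr g" using t g_le_2 by (intro powr_mono') auto
  finally have "(1 - theta) powr (- g) \<le> 1 / (1 - delta0 / 4)"
    using t delta0 by (simp add: powr_minus_divide divide_left_mono)
  then have "(1 - theta) powr (- g) * (1 - delta0) \<le> 1 / (1 - delta0 / 4) * (1 - delta0)"
    using delta0 by (intro mult_right_mono) auto
  also have "\<dots> \<le> 1 - delta0 / 2"
    using delta0 by (simp add: field_simps)
  finally show ?thesis .
qed

lemma survival_C_from_G:
  "1 \<le> n \<Longrightarrow> y \<in> \<Omega> \<Longrightarrow> y \<in> G \<Longrightarrow> y \<notin> C \<Longrightarrow>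
     survival P C n y \<le> ennreal (inner_const * W y * real n powr (- g))"
proof (induction n arbitrary: y rule: less_induct)
  case (less n)
  define r where "r = real n powr (- g)"
  have r: "0 \<le> r" unfolding r_def by simp
  have Wy: "M1 < W y" and W0: "0 \<le> W y"
    using less.prems W_nonneg by auto
  have "induced_W y \<le> ennreal ((1 - \<delta>) * W y)"
    unfolding induced_W_def using drift_W less.prems Wy by auto
  also have "\<dots> \<le> ennreal ((1 - delta0) * W y)"
    using delta0 W0 by (intro ennreal_leI mult_right_mono) auto
  finally have induced: "induced_W y \<le> ennreal ((1 - delta0) * W y)" .
  have eq: "tail_const * Vplus y * (1 + (2 / theta) powr g) = inner_const * delta0 / 2"
    using less.prems delta0 unfolding inner_const_def Vplus_def by simp
  have "survival P C n y
      \<le> ennreal (tail_const * Vplus y * (1 + (2 / theta) powr g) * r)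
        + ennreal (inner_const * (1 - theta) powr (- g) * r) * induced_W y"
    unfolding r_def using less by (intro survival_C_le) auto
  also have "\<dots> = ennreal (inner_const * delta0 / 2 * r)
      + ennreal (inner_const * (1 - theta) powr (- g) * r) * induced_W y"
    unfolding eq ..
  also have "\<dots> \<le> ennreal (inner_const * delta0 / 2 * r)
      + ennreal (inner_const * (1 - theta) powr (- g) * r) * ennreal ((1 - delta0) * W y)"
    by (intro add_left_mono mult_left_mono induced) auto
  also have "\<dots> = ennreal (inner_const * delta0 / 2 * r + inner_const * (1 - theta) powr (- g) * r * ((1 - delta0) * W y))"
    using inner_const_nonneg r delta0 W0
    by (simp add: ennreal_mult[symmetric] ennreal_plus[symmetric] del: ennreal_plus)
  also have "\<dots> \<le> ennreal (inner_const * W y * r)"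
  proof (rule ennreal_leI)
    have "inner_const * (1 - theta) powr (- g) * r * ((1 - delta0) * W y)
        = inner_const * r * W y * ((1 - theta) powr (- g) * (1 - delta0))"
      by (simp add: algebra_simps)
    also have "\<dots> \<le> inner_const * r * W y * (1 - delta0 / 2)"
      using theta_contraction inner_const_nonneg r W0 by (intro mult_left_mono) auto
    finally have "inner_const * (1 - theta) powr (- g) * r * ((1 - delta0) * W y)
        \<le> inner_const * r * W y * (1 - delta0 / 2)" .
    moreover have "inner_const * delta0 / 2 * r \<le> inner_const * delta0 / 2 * r * W y"
      using mult_left_mono[of 1 "W y" "inner_const * delta0 / 2 * r"] inner_const_nonneg delta0 r Wy M1
      by simp
    ultimately show "inner_const * delta0 / 2 * r + inner_const * (1 - theta) powr (- g) * r * ((1 - delta0) * W y)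
        \<le> inner_const * W y * r"
      by (simp add: algebra_simps)
  qed
  finally show ?case unfolding r_def .
qed

definition powr_series :: real where
  "powr_series = (\<Sum>j. real (Suc j) powr (- g))"

lemma summable_powr_series: "summable (\<lambda>j. real (Suc j) powr (- g))"
  using summable_ignore_initial_segment[of "\<lambda>j. real j powr (- g)" 1] g_gt_1
  by (simp add: summable_real_powr_iff)

lemma sum_le_powr_series: "(\<Sum>j<J. real (Suc j) powr (- g)) \<le> powr_series"
  unfolding powr_series_def by (rule sum_le_suminf[OF summable_powr_series]) auto

lemma powr_series_nonneg: "0 \<le> powr_series"
  using sum_le_powr_series[of 0] by simp

lemma sum_survival_G_le:
  assumes x: "x \<in> \<Omega>"
  shows "(\<Sum>j<J. survival P G j x) \<le> ennreal (1 + tail_const * Vplus x * powr_series)"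
proof (cases J)
  case (Suc J')
  have "(\<Sum>j<J. survival P G j x) = 1 + (\<Sum>j<J'. survival P G (Suc j) x)"
    unfolding Suc by (subst sum.lessThan_Suc_shift) simp
  also have "\<dots> \<le> 1 + (\<Sum>j<J'. ennreal (tail_const * Vplus x * real (Suc j) powr (- g)))"
    using survival_G_tail[OF _ x] by (intro add_left_mono sum_mono order_trans[OF survival_G_tail[OF _ x]])
      (auto simp: tail_bound_def intro!: ennreal_leI)
  also have "\<dots> = ennreal (1 + tail_const * Vplus x * (\<Sum>j<J'. real (Suc j) powr (- g)))"
  proof -
    have "0 \<le> tail_const * Vplus x * (\<Sum>j<J'. real (Suc j) powr (- g))"
      using tail_const_ge(1) Vplus_ge_1[of x] by (intro mult_nonneg_nonneg sum_nonneg) auto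
    moreover have "(\<Sum>j<J'. ennreal (tail_const * Vplus x * real (Suc j) powr (- g)))
        = ennreal (tail_const * Vplus x * (\<Sum>j<J'. real (Suc j) powr (- g)))"
      using tail_const_ge(1) Vplus_ge_1[of x] by (simp add: sum_ennreal sum_distrib_left)
    ultimately show ?thesis by (simp add: ennreal_plus)
  qed
  also have "\<dots> \<le> ennreal (1 + tail_const * Vplus x * powr_series)"
    using tail_const_Vplus_ge_1[of x] sum_le_powr_series[of J'] tail_const_ge(1) Vplus_ge_1[of x]
    by (intro ennreal_leI add_left_mono mult_left_mono) auto
  finally show ?thesis .
qed simp

lemma induced_W_le:
  assumes x: "x \<in> \<Omega>"
  shows "induced_W x \<le> ennreal (W x + bW * (1 + tail_const * Vplus x * powr_series))"
  unfolding induced_W_def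
proof (rule suminf_le_const[OF summableI])
  fix J
  have "(\<Sum>k<J. entrance P G (\<lambda>y. ennreal (W y)) k x) \<le> (\<Sum>k<Suc J. entrance P G (\<lambda>y. ennreal (W y)) k x)"
    by (rule sum_mono2) auto
  also have "\<dots> \<le> (\<Sum>j<J. entrance P G (\<lambda>y. ennreal (W y)) (Suc j) x) + avoiding P G (\<lambda>y. ennreal (W y)) J x"
    by (subst sum.lessThan_Suc_shift) simp
  also have "\<dots> \<le> ennreal (W x) + ennreal bW * (\<Sum>j<J. survival P G j x)"
    by (rule entrance_sum_drift[OF G_in_sets _ P_W_le x]) measurable
  also have "\<dots> \<le> ennreal (W x) + ennreal bW * ennreal (1 + tail_const * Vplus x * powr_series)"
    by (intro add_left_mono mult_left_mono sum_survival_G_le[OF x]) auto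
  also have "\<dots> = ennreal (W x + bW * (1 + tail_const * Vplus x * powr_series))"
    using W_nonneg[OF x] bW tail_const_Vplus_ge_1[of x] powr_series_nonneg
    by (simp add: ennreal_mult[symmetric] ennreal_plus[symmetric] del: ennreal_plus)
  finally show "(\<Sum>k<J. entrance P G (\<lambda>y. ennreal (W y)) k x) \<le> \<dots>" .
qed

lemma survival_C_tail:
  "\<exists>K\<ge>0. \<forall>x\<in>\<Omega>. \<forall>n\<ge>1.
     survival P C n x \<le> ennreal (K * (max 1 (W x) + max 1 (V x)) * real n powr (- g))"
proof -
  define q where "q = (2 / theta) powr g"
  define B where "B = inner_const * (1 - theta) powr (- g)"
  define K where "K = tail_const * (1 + q) * level_const + B + B * bW
    + B * bW * tail_const * powr_series * level_const"
  have q: "0 \<le> q" and B: "0 \<le> B"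
    unfolding q_def B_def using inner_const_nonneg by auto
  have K: "0 \<le> K"
    unfolding K_def using q B bW tail_const_ge level_const_ge powr_series_nonneg by simp
  have "survival P C n x \<le> ennreal (K * (max 1 (W x) + max 1 (V x)) * real n powr (- g))"
    if x: "x \<in> \<Omega>" and n: "1 \<le> n" for x n
  proof -
    define S where "S = max 1 (W x) + max 1 (V x)"
    define r where "r = real n powr (- g)"
    have r: "0 \<le> r" unfolding r_def by simp
    have W: "0 \<le> W x" "W x \<le> S" and S: "1 \<le> S"
      unfolding S_def using W_nonneg[OF x] by auto
    have Vp: "0 \<le> Vplus x" "Vplus x \<le> level_const * S"
      using Vplus_ge_1[of x] Vplus_le[of x] level_const_ge
      by (auto simp: S_def intro: order_trans[OF _ mult_left_mono])
    have "survival P C n x \<le> ennreal (tail_const * Vplus x * (1 + q) * r) + ennreal (B * r) * induced_W x"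
      using survival_C_le[OF x n] survival_C_from_G unfolding q_def B_def r_def by (simp add: ac_simps)
    also have "\<dots> \<le> ennreal (tail_const * Vplus x * (1 + q) * r)
        + ennreal (B * r) * ennreal (W x + bW * (1 + tail_const * Vplus x * powr_series))"
      by (intro add_left_mono mult_left_mono induced_W_le[OF x]) auto
    also have "\<dots> = ennreal (r * (tail_const * (1 + q) * Vplus x + B * W x + B * bW
        + B * bW * tail_const * powr_series * Vplus x))"
      using q B r W Vp bW tail_const_ge powr_series_nonneg
      by (simp add: ennreal_mult[symmetric] ennreal_plus[symmetric] algebra_simps del: ennreal_plus)
    also have "\<dots> \<le> ennreal (r * (K * S))"
    proof (intro ennreal_leI mult_left_mono[OF _ r])
      have "tail_const * (1 + q) * Vplus x \<le> tail_const * (1 + q) * (level_const * S)"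
        using Vp q tail_const_ge by (intro mult_left_mono) auto
      moreover have "B * bW * tail_const * powr_series * Vplus x
          \<le> B * bW * tail_const * powr_series * (level_const * S)"
        using Vp B bW tail_const_ge powr_series_nonneg by (intro mult_left_mono) auto
      moreover have "B * W x \<le> B * S"
        using W B by (intro mult_left_mono) auto
      moreover have "B * bW \<le> B * bW * S"
        using mult_left_mono[of 1 S "B * bW"] S B bW by simp
      moreover have "K * S = tail_const * (1 + q) * (level_const * S) + B * S + B * bW * S
          + B * bW * tail_const * powr_series * (level_const * S)"
        unfolding K_def by (simp add: algebra_simps)
      ultimately show "tail_const * (1 + q) * Vplus x + B * W x + B * bW
          + B * bW * tail_const * powr_series * Vplus x \<le> K * S"
        by linarith
    qed
    finally show ?thesis unfolding S_def r_def by (simp add: ac_simps)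
  qed
  with K show ?thesis by blast
qed

end

section \<open>The energy exchange kernel\<close>

abbreviation state_space :: "state measure" where "state_space \<equiv> PiM UNIV (\<lambda>_. borel)"

lemma space_state_space[simp]: "space state_space = UNIV" by (simp add: space_PiM)

lemma measurable_coordinate[measurable]: "(\<lambda>x. x j) \<in> borel_measurable state_space"
  by (rule measurable_component_singleton) simp

lemma sets_unifP[simp]: "sets unifP = sets borel" by (simp add: unifP_def)

lemma sets_expo[simp]: "sets (expo T) = sets borel" by (simp add: expo_def)

lemma space_unifP[simp]: "space unifP = UNIV" by (simp add: unifP_def)

lemma space_expo[simp]: "space (expo T) = UNIV" by (simp add: expo_def)

lemma prob_space_unifP: "prob_space unifP"
  unfolding unifP_def by (rule prob_space_uniform_measure) auto

lemma prob_space_expo: "T > 0 \<Longrightarrow> prob_space (expo T)"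
  unfolding expo_def using prob_space_exponential_density[of "1/T"] by simp

lemma sigma_finite_unifP: "sigma_finite_measure unifP"
  using prob_space_unifP by (simp add: prob_space_imp_sigma_finite)

lemma sigma_finite_expo: "T > 0 \<Longrightarrow> sigma_finite_measure (expo T)"
  using prob_space_expo by (simp add: prob_space_imp_sigma_finite)

definition exchange_upd :: "nat \<Rightarrow> state \<Rightarrow> real \<Rightarrow> state" where
  "exchange_upd i E p = E(i := p * (E i + E (i+1)), i+1 := (1 - p) * (E i + E (i+1)))"

definition bath_upd :: "nat \<Rightarrow> state \<Rightarrow> real \<Rightarrow> real \<Rightarrow> state" where
  "bath_upd i E p x = E(i := p * (E i + x))"

lemma measurable_exchange_upd_pair[measurable]: "(\<lambda>(E,p). exchange_upd i E p) \<in> measurable (state_space \<Otimes>\<^sub>M borel) state_space"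
  unfolding exchange_upd_def
  by (rule measurable_PiM_single', simp add: case_prod_beta fun_upd_def, measurable)

lemma measurable_bath_upd_triple[measurable]: "(\<lambda>z. bath_upd i (fst (fst z)) (snd (fst z)) (snd z)) \<in> measurable ((state_space \<Otimes>\<^sub>M borel) \<Otimes>\<^sub>M borel) state_space"
  unfolding bath_upd_def
  by (rule measurable_PiM_single', simp add: case_prod_beta fun_upd_def, measurable)

lemma Qop_eq: "Qop N TL TR K f E =
     (\<Sum>i=1..<N. ennreal (Rate K (E i) (E (i+1)) / Lam N K) * (\<integral>\<^sup>+ p. f (exchange_upd i E p) \<partial>unifP))
   + ennreal (Rate K TL (E 1) / Lam N K) * (\<integral>\<^sup>+ p. (\<integral>\<^sup>+ x. f (bath_upd 1 E p x) \<partial>expo TL) \<partial>unifP)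
   + ennreal (Rate K (E N) TR / Lam N K) * (\<integral>\<^sup>+ p. (\<integral>\<^sup>+ x. f (bath_upd N E p x) \<partial>expo TR) \<partial>unifP)
   + ennreal (1 - totalRate N TL TR K E / Lam N K) * f E"
  unfolding Qop_def bath_upd_def exchange_upd_def by simp

lemma measurable_exchange_integral:
  assumes f[measurable]: "f \<in> borel_measurable state_space"
  shows "(\<lambda>E. \<integral>\<^sup>+ p. f (exchange_upd i E p) \<partial>unifP) \<in> borel_measurable state_space"
proof -
  interpret sigma_finite_measure unifP by (rule sigma_finite_unifP)
  have "(\<lambda>(E,p). f (exchange_upd i E p)) \<in> borel_measurable (state_space \<Otimes>\<^sub>M unifP)"
    by (subst measurable_cong_sets[OF sets_pair_measure_cong[OF refl sets_unifP] refl]) measurable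
  then show ?thesis by (rule borel_measurable_nn_integral)
qed

lemma measurable_bath_integral:
  assumes f[measurable]: "f \<in> borel_measurable state_space" and T: "T > 0"
  shows "(\<lambda>E. \<integral>\<^sup>+ p. (\<integral>\<^sup>+ x. f (bath_upd i E p x) \<partial>expo T) \<partial>unifP) \<in> borel_measurable state_space"
proof -
  interpret u: sigma_finite_measure unifP by (rule sigma_finite_unifP)
  interpret e: sigma_finite_measure "expo T" by (rule sigma_finite_expo[OF T])
  have "(\<lambda>(Ep,x). f (bath_upd i (fst Ep) (snd Ep) x)) \<in> borel_measurable ((state_space \<Otimes>\<^sub>M unifP) \<Otimes>\<^sub>M expo T)"
    by (subst measurable_cong_sets[OF sets_pair_measure_cong[OF sets_pair_measure_cong[OF refl sets_unifP] sets_expo] refl]) measurable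
  then have "(\<lambda>Ep. \<integral>\<^sup>+ x. f (bath_upd i (fst Ep) (snd Ep) x) \<partial>expo T) \<in> borel_measurable (state_space \<Otimes>\<^sub>M unifP)"
    by (rule e.borel_measurable_nn_integral)
  then have "(\<lambda>(E,p). \<integral>\<^sup>+ x. f (bath_upd i E p x) \<partial>expo T) \<in> borel_measurable (state_space \<Otimes>\<^sub>M unifP)"
    by (simp add: case_prod_beta')
  then show ?thesis using u.borel_measurable_nn_integral[of "\<lambda>E p. \<integral>\<^sup>+ x. f (bath_upd i E p x) \<partial>expo T"] by simp
qed

lemma measurable_Qop:
  assumes f[measurable]: "f \<in> borel_measurable state_space" and "TL > 0" "TR > 0"
  shows "Qop N TL TR K f \<in> borel_measurable state_space"
proof -
  note [measurable] = measurable_exchange_integral[OF f] measurable_bath_integral[OF f \<open>TL>0\<close>] measurable_bath_integral[OF f \<open>TR>0\<close>]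
  show ?thesis
    unfolding Qop_eq[abs_def] totalRate_def Rate_def by measurable
qed

lemma measurable_exchange_upd[measurable]: "(\<lambda>p. exchange_upd i E p) \<in> measurable borel state_space"
  unfolding exchange_upd_def
  by (rule measurable_PiM_single', simp add: case_prod_beta fun_upd_def, measurable)

lemma measurable_bath_upd[measurable]: "(\<lambda>x. bath_upd i E p x) \<in> measurable borel state_space"
  unfolding bath_upd_def
  by (rule measurable_PiM_single', simp add: case_prod_beta fun_upd_def, measurable)

lemma measurable_bath_upd_pair[measurable]: "(\<lambda>z. bath_upd i E (fst z) (snd z)) \<in> measurable (borel \<Otimes>\<^sub>M borel) state_space"
  unfolding bath_upd_def
  by (rule measurable_PiM_single', simp add: case_prod_beta fun_upd_def, measurable)

lemma measurable_bath_inner_integral: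
  assumes f[measurable]: "f \<in> borel_measurable state_space" and T: "T > 0"
  shows "(\<lambda>p. \<integral>\<^sup>+ x. f (bath_upd i E p x) \<partial>expo T) \<in> borel_measurable borel"
proof -
  interpret e: sigma_finite_measure "expo T" by (rule sigma_finite_expo[OF T])
  have "(\<lambda>z. f (bath_upd i E (fst z) (snd z))) \<in> borel_measurable (borel \<Otimes>\<^sub>M expo T)"
    by (subst measurable_cong_sets[OF sets_pair_measure_cong[OF refl sets_expo] refl]) measurable
  then have "(\<lambda>p. \<integral>\<^sup>+ x. f (bath_upd i E (fst (p,x)) (snd (p,x))) \<partial>expo T) \<in> borel_measurable borel"
    by (intro e.borel_measurable_nn_integral) (simp add: case_prod_beta')
  then show ?thesis by simp
qed

lemma nn_integral_add_unifP: "F \<in> borel_measurable borel \<Longrightarrow> G \<in> borel_measurable borel \<Longrightarrow>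
   (\<integral>\<^sup>+ p. F p + G p \<partial>unifP) = (\<integral>\<^sup>+ p. F p \<partial>unifP) + (\<integral>\<^sup>+ p. G p \<partial>unifP)"
  by (rule nn_integral_add) (auto simp: measurable_cong_sets[OF sets_unifP refl])

lemma nn_integral_add_expo: "F \<in> borel_measurable borel \<Longrightarrow> G \<in> borel_measurable borel \<Longrightarrow>
   (\<integral>\<^sup>+ p. F p + G p \<partial>expo T) = (\<integral>\<^sup>+ p. F p \<partial>expo T) + (\<integral>\<^sup>+ p. G p \<partial>expo T)"
  by (rule nn_integral_add) (auto simp: measurable_cong_sets[OF sets_expo refl])

lemma nn_integral_cmult_unifP: "F \<in> borel_measurable borel \<Longrightarrow> (\<integral>\<^sup>+ p. c * F p \<partial>unifP) = c * (\<integral>\<^sup>+ p. F p \<partial>unifP)"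
  by (rule nn_integral_cmult) (auto simp: measurable_cong_sets[OF sets_unifP refl])

lemma nn_integral_cmult_expo: "F \<in> borel_measurable borel \<Longrightarrow> (\<integral>\<^sup>+ p. c * F p \<partial>expo T) = c * (\<integral>\<^sup>+ p. F p \<partial>expo T)"
  by (rule nn_integral_cmult) (auto simp: measurable_cong_sets[OF sets_expo refl])

lemma Qop_add:
  assumes f[measurable]: "f \<in> borel_measurable state_space" and g[measurable]: "g \<in> borel_measurable state_space" and T: "TL > 0" "TR > 0"
  shows "Qop N TL TR K (\<lambda>x. f x + g x) E = Qop N TL TR K f E + Qop N TL TR K g E"
proof -
  have a: "(\<integral>\<^sup>+ p. f (exchange_upd i E p) + g (exchange_upd i E p) \<partial>unifP) = (\<integral>\<^sup>+ p. f (exchange_upd i E p) \<partial>unifP) + (\<integral>\<^sup>+ p. g (exchange_upd i E p) \<partial>unifP)" for i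
    by (rule nn_integral_add_unifP) measurable
  have b: "(\<integral>\<^sup>+ p. (\<integral>\<^sup>+ x. f (bath_upd i E p x) + g (bath_upd i E p x) \<partial>expo T) \<partial>unifP)
     = (\<integral>\<^sup>+ p. (\<integral>\<^sup>+ x. f (bath_upd i E p x) \<partial>expo T) \<partial>unifP) + (\<integral>\<^sup>+ p. (\<integral>\<^sup>+ x. g (bath_upd i E p x) \<partial>expo T) \<partial>unifP)"
    if "T > 0" for i T
    apply (subst nn_integral_add_expo, measurable)
    apply (rule nn_integral_add_unifP)
    using measurable_bath_inner_integral[OF f that] measurable_bath_inner_integral[OF g that] by auto
  show ?thesis unfolding Qop_eq a b[OF T(1)] b[OF T(2)]
    by (simp add: algebra_simps sum.distrib)
qed

lemma Qop_cmult:
  assumes f[measurable]: "f \<in> borel_measurable state_space" and T: "TL > 0" "TR > 0"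
  shows "Qop N TL TR K (\<lambda>x. c * f x) E = c * Qop N TL TR K f E"
proof -
  have a: "(\<integral>\<^sup>+ p. c * f (exchange_upd i E p) \<partial>unifP) = c * (\<integral>\<^sup>+ p. f (exchange_upd i E p) \<partial>unifP)" for i
    by (rule nn_integral_cmult_unifP) measurable
  have b: "(\<integral>\<^sup>+ p. (\<integral>\<^sup>+ x. c * f (bath_upd i E p x) \<partial>expo T) \<partial>unifP)
     = c * (\<integral>\<^sup>+ p. (\<integral>\<^sup>+ x. f (bath_upd i E p x) \<partial>expo T) \<partial>unifP)"
    if "T > 0" for i T
    apply (subst nn_integral_cmult_expo, measurable)
    apply (rule nn_integral_cmult_unifP)
    using measurable_bath_inner_integral[OF f that] by auto
  show ?thesis unfolding Qop_eq a b[OF T(1)] b[OF T(2)]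
    by (simp add: algebra_simps sum_distrib_left)
qed

lemma AE_unifP: "AE p in unifP. 0 < p \<and> p < 1"
  unfolding unifP_def by (rule AE_uniform_measureI) auto

lemma AE_expo_nonneg: "AE x in expo T. 0 \<le> x"
  unfolding expo_def by (subst AE_density) (auto simp: exponential_density_def)

lemma inOrth_exchange_upd: "inOrth N E \<Longrightarrow> i \<in> {1..<N} \<Longrightarrow> 0 < p \<Longrightarrow> p < 1 \<Longrightarrow> inOrth N (exchange_upd i E p)"
proof -
  assume a: "inOrth N E" "i \<in> {1..<N}" "0 < p" "p < 1"
  then have "0 < E i + E (Suc i)" unfolding inOrth_def by (auto intro!: add_pos_pos)
  with a show ?thesis unfolding inOrth_def exchange_upd_def by auto
qed

lemma inOrth_bath_upd: "inOrth N E \<Longrightarrow> i \<in> {1..N} \<Longrightarrow> 0 < p \<Longrightarrow> 0 \<le> x \<Longrightarrow> inOrth N (bath_upd i E p x)"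
  unfolding inOrth_def bath_upd_def by (auto intro!: mult_pos_pos add_pos_nonneg)

lemma Qop_mono:
  assumes E: "inOrth N E" and fg: "\<And>z. inOrth N z \<Longrightarrow> f z \<le> g z" and N: "N \<ge> 1"
  shows "Qop N TL TR K f E \<le> Qop N TL TR K g E"
proof -
  have a: "(\<integral>\<^sup>+ p. f (exchange_upd i E p) \<partial>unifP) \<le> (\<integral>\<^sup>+ p. g (exchange_upd i E p) \<partial>unifP)" if "i \<in> {1..<N}" for i
    apply (rule nn_integral_mono_AE)
    using AE_unifP by eventually_elim (auto intro!: fg inOrth_exchange_upd E that)
  have b: "(\<integral>\<^sup>+ p. (\<integral>\<^sup>+ x. f (bath_upd i E p x) \<partial>expo T) \<partial>unifP)
     \<le> (\<integral>\<^sup>+ p. (\<integral>\<^sup>+ x. g (bath_upd i E p x) \<partial>expo T) \<partial>unifP)" if "i \<in> {1..N}" for i T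
    apply (rule nn_integral_mono_AE)
    using AE_unifP apply eventually_elim
    apply (rule nn_integral_mono_AE)
    using AE_expo_nonneg apply eventually_elim
    by (auto intro!: fg inOrth_bath_upd E that)
  show ?thesis unfolding Qop_eq
    using N by (intro add_mono mult_left_mono sum_mono a b fg E) auto
qed

lemma Rate_nonneg: "K \<ge> 0 \<Longrightarrow> a \<ge> 0 \<Longrightarrow> b \<ge> 0 \<Longrightarrow> Rate K a b \<ge> 0"
  unfolding Rate_def by auto

lemma Rate_le_K: "Rate K a b \<le> K" unfolding Rate_def by auto

lemma ennreal_add_complement: "(a::real) \<ge> 0 \<Longrightarrow> b \<ge> 0 \<Longrightarrow> c \<ge> 0 \<Longrightarrow> a + b + c \<le> 1 \<Longrightarrow>
  ennreal a + ennreal b + ennreal c + ennreal (1 - (a + b + c)) = 1"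
  by (simp add: ennreal_plus[symmetric] del: ennreal_plus)

lemma Qop_weights_sum:
  assumes E: "inOrth N E" and N: "N \<ge> 1" and K: "K > 0" and T: "TL > 0" "TR > 0"
  shows "(\<Sum>i=1..<N. ennreal (Rate K (E i) (E (i+1)) / Lam N K)) + ennreal (Rate K TL (E 1) / Lam N K)
        + ennreal (Rate K (E N) TR / Lam N K) + ennreal (1 - totalRate N TL TR K E / Lam N K) = 1"
proof -
  have Epos: "i \<in> {1..N} \<Longrightarrow> 0 < E i" for i using E unfolding inOrth_def by auto
  have L: "Lam N K > 0" unfolding Lam_def using K by simp
  have r: "i \<in> {1..<N} \<Longrightarrow> 0 \<le> Rate K (E i) (E (i+1))" for i
    using Epos[of i] Epos[of "i+1"] K by (intro Rate_nonneg) auto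
  have rL: "0 \<le> Rate K TL (E 1)" using Epos[of 1] K T N by (intro Rate_nonneg) auto
  have rR: "0 \<le> Rate K (E N) TR" using Epos[of N] K T N by (intro Rate_nonneg) auto
  have "(\<Sum>i=1..<N. Rate K (E i) (E (i+1))) \<le> (\<Sum>i=1..<N. K)" by (rule sum_mono) (rule Rate_le_K)
  also have "\<dots> = real (N - 1) * K" by simp
  finally have tot: "totalRate N TL TR K E \<le> Lam N K"
    unfolding totalRate_def Lam_def using Rate_le_K[of K TL "E 1"] Rate_le_K[of K "E N" TR] N
    by (simp add: of_nat_diff algebra_simps)
  have w0: "0 \<le> 1 - totalRate N TL TR K E / Lam N K" using tot L by (simp add: field_simps)
  have "(\<Sum>i=1..<N. ennreal (Rate K (E i) (E (i+1)) / Lam N K)) = ennreal (\<Sum>i=1..<N. Rate K (E i) (E (i+1)) / Lam N K)"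
    using r L by (intro sum_ennreal) auto
  then show ?thesis
    using r rL rR L w0
    apply (simp add: ennreal_plus[symmetric] sum_nonneg del: ennreal_plus)
    apply (simp add: totalRate_def sum_divide_distrib[symmetric] diff_divide_distrib add_divide_distrib)
    apply (rule ennreal_add_complement)
    using tot L r by (auto intro!: sum_nonneg simp: totalRate_def field_simps)
qed

lemma Qop_le_bound:
  assumes E: "inOrth N E" and N: "N \<ge> 1" and K: "K > 0" and T: "TL > 0" "TR > 0"
  and a: "\<And>i. i \<in> {1..<N} \<Longrightarrow> (\<integral>\<^sup>+ p. f (exchange_upd i E p) \<partial>unifP) \<le> B"
  and b: "(\<integral>\<^sup>+ p. (\<integral>\<^sup>+ x. f (bath_upd 1 E p x) \<partial>expo TL) \<partial>unifP) \<le> B"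
  and c: "(\<integral>\<^sup>+ p. (\<integral>\<^sup>+ x. f (bath_upd N E p x) \<partial>expo TR) \<partial>unifP) \<le> B"
  and d: "f E \<le> B"
  shows "Qop N TL TR K f E \<le> B"
proof -
  have "Qop N TL TR K f E \<le> (\<Sum>i=1..<N. ennreal (Rate K (E i) (E (i+1)) / Lam N K) * B)
     + ennreal (Rate K TL (E 1) / Lam N K) * B + ennreal (Rate K (E N) TR / Lam N K) * B
     + ennreal (1 - totalRate N TL TR K E / Lam N K) * B"
    unfolding Qop_eq by (intro add_mono mult_left_mono sum_mono a b c d) auto
  also have "\<dots> = ((\<Sum>i=1..<N. ennreal (Rate K (E i) (E (i+1)) / Lam N K)) + ennreal (Rate K TL (E 1) / Lam N K)
        + ennreal (Rate K (E N) TR / Lam N K) + ennreal (1 - totalRate N TL TR K E / Lam N K)) * B"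
    by (simp only: distrib_right sum_distrib_right)
  also have "\<dots> = B" using Qop_weights_sum[OF E N K T] by simp
  finally show ?thesis .
qed

lemma emeasure_unifP_UNIV[simp]: "emeasure unifP UNIV = 1"
  using prob_space.emeasure_space_1[OF prob_space_unifP] by simp

lemma emeasure_expo_UNIV[simp]: "T > 0 \<Longrightarrow> emeasure (expo T) UNIV = 1"
  using prob_space.emeasure_space_1[OF prob_space_expo] by simp

lemma nn_integral_const_unifP: "(\<integral>\<^sup>+ p. c \<partial>unifP) = c"
  using prob_space.emeasure_space_1[OF prob_space_unifP] by simp

lemma nn_integral_const_expo: "T > 0 \<Longrightarrow> (\<integral>\<^sup>+ p. c \<partial>expo T) = c"
  using prob_space.emeasure_space_1[OF prob_space_expo] by simp

lemma Qop_one: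
  assumes E: "inOrth N E" and N: "N \<ge> 1" and K: "K > 0" and T: "TL > 0" "TR > 0"
  shows "Qop N TL TR K (\<lambda>_. 1) E \<le> 1"
  by (rule Qop_le_bound[OF E N K T]) (auto simp: nn_integral_const_unifP nn_integral_const_expo T)

lemma nn_integral_powr_Ioo:
  assumes b: "-1 < (b::real)"
  shows "(\<integral>\<^sup>+ p. ennreal (p powr b) * indicator {0<..<1} p \<partial>lborel) = ennreal (1 / (b + 1))"
proof -
  have "((\<lambda>x. x powr b) has_integral (1 powr (b+1) / (b+1))) {0..1}"
    by (rule has_integral_powr_from_0) (use b in auto)
  then have "((\<lambda>x. x powr b) has_integral (1 / (b+1))) {0<..<1}"
    by (simp add: has_integral_Icc_iff_Ioo)
  then show ?thesis by (subst nn_integral_has_integral_lebesgue') auto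
qed

lemma nn_integral_powr_Ioo_reflect:
  assumes b: "-1 < (b::real)"
  shows "(\<integral>\<^sup>+ p. ennreal ((1 - p) powr b) * indicator {0<..<1} p \<partial>lborel) = ennreal (1 / (b + 1))"
proof -
  have "(\<integral>\<^sup>+ p. ennreal (p powr b) * indicator {0<..<1} p \<partial>lborel) =
        (\<integral>\<^sup>+ p. ennreal ((1 + -1 * p) powr b) * indicator {0<..<1} (1 + -1 * p) \<partial>lborel)"
    using nn_integral_real_affine[of "\<lambda>p. ennreal (p powr b) * indicator {0<..<1} p" "-1" 1]
    by simp
  also have "\<dots> = (\<integral>\<^sup>+ p. ennreal ((1 - p) powr b) * indicator {0<..<1} p \<partial>lborel)"
    by (auto intro!: nn_integral_cong simp: indicator_def)
  finally show ?thesis using nn_integral_powr_Ioo[OF b] by simp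
qed

lemma nn_integral_unifP_powr_sym:
  assumes b: "-1 < (b::real)"
  shows "(\<integral>\<^sup>+ p. ennreal (p powr b + (1 - p) powr b) \<partial>unifP) = ennreal (2 / (b + 1))"
proof -
  have "(\<integral>\<^sup>+ p. ennreal (p powr b + (1 - p) powr b) \<partial>unifP)
     = (\<integral>\<^sup>+ p. ennreal (p powr b + (1 - p) powr b) * indicator {0<..<1} p \<partial>lborel)"
    unfolding unifP_def by (subst nn_integral_uniform_measure) (auto simp: divide_ennreal_def)
  also have "\<dots> = (\<integral>\<^sup>+ p. ennreal (p powr b) * indicator {0<..<1} p + ennreal ((1 - p) powr b) * indicator {0<..<1} p \<partial>lborel)"
    by (intro nn_integral_cong) (simp add: ennreal_plus distrib_right)
  also have "\<dots> = ennreal (1 / (b + 1)) + ennreal (1 / (b + 1))"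
    by (subst nn_integral_add) (auto simp: nn_integral_powr_Ioo nn_integral_powr_Ioo_reflect b)
  also have "\<dots> = ennreal (2 / (b + 1))" using b by (simp add: ennreal_plus[symmetric] del: ennreal_plus)
  finally show ?thesis .
qed

lemma nn_integral_expo_mean:
  assumes T: "T > 0"
  shows "(\<integral>\<^sup>+ x. ennreal x \<partial>expo T) = ennreal T"
proof -
  have "(\<integral>\<^sup>+ x. ennreal x \<partial>expo T) = (\<integral>\<^sup>+ x. ennreal (exponential_density (1/T) x) * ennreal x \<partial>lborel)"
    unfolding expo_def by (subst nn_integral_density) auto
  also have "\<dots> = (\<integral>\<^sup>+ x. ennreal (erlang_density 0 (1/T) x * x ^ 1) \<partial>lborel)"
    using T by (intro nn_integral_cong) (auto simp: exponential_density_def ennreal_mult[symmetric] ennreal_neg)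
  also have "\<dots> = ennreal T" using T by (subst nn_integral_erlang_ith_moment) auto
  finally show ?thesis .
qed

lemma measurable_Wf[measurable]: "(\<lambda>E. Wf N E) \<in> borel_measurable state_space" unfolding Wf_def by measurable

lemma measurable_Vf[measurable]: "(\<lambda>E. Vf N \<eta> E) \<in> borel_measurable state_space" unfolding Vf_def by measurable

lemma Wf_exchange_upd: assumes "i \<in> {1..<N}" shows "Wf N (exchange_upd i E p) = Wf N E"
proof -
  have e: "exchange_upd i E p j = E j + (if j = i then p * (E i + E (i+1)) - E i else 0)
        + (if j = i+1 then (1 - p) * (E i + E (i+1)) - E (i+1) else 0)" for j
    unfolding exchange_upd_def by auto
  show ?thesis unfolding Wf_def e sum.distrib using assms
    by (simp add: sum.delta algebra_simps)
qed

lemma Wf_bath_upd: assumes "i \<in> {1..N}" shows "Wf N (bath_upd i E p x) = Wf N E + (p * (E i + x) - E i)"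
proof -
  have e: "bath_upd i E p x j = E j + (if j = i then p * (E i + x) - E i else 0)" for j
    unfolding bath_upd_def by auto
  show ?thesis unfolding Wf_def e sum.distrib using assms
    by (simp add: sum.delta algebra_simps)
qed

lemma Wf_nonneg: "inOrth N E \<Longrightarrow> 0 \<le> Wf N E"
  unfolding Wf_def inOrth_def by (rule sum_nonneg) (auto intro: less_imp_le)

lemma Qop_Wf_le:
  assumes E: "inOrth N E" and N: "N \<ge> 1" and K: "K > 0" and T: "TL > 0" "TR > 0"
  shows "Qop N TL TR K (\<lambda>y. ennreal (Wf N y)) E \<le> ennreal (Wf N E + TL + TR)"
proof (rule Qop_le_bound[OF E N K T])
  have W0: "0 \<le> Wf N E" by (rule Wf_nonneg[OF E])
  have E1: "0 < E i" if "i \<in> {1..N}" for i using E that unfolding inOrth_def by auto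
  show "(\<integral>\<^sup>+ p. ennreal (Wf N (exchange_upd i E p)) \<partial>unifP) \<le> ennreal (Wf N E + TL + TR)" if "i \<in> {1..<N}" for i
    using that T W0 by (simp add: Wf_exchange_upd nn_integral_const_unifP)
  have bnd: "(\<integral>\<^sup>+ p. (\<integral>\<^sup>+ x. ennreal (Wf N (bath_upd i E p x)) \<partial>expo T) \<partial>unifP) \<le> ennreal (Wf N E + T)"
    if i: "i \<in> {1..N}" and T: "T > 0" for i T
  proof -
    have "(\<integral>\<^sup>+ p. (\<integral>\<^sup>+ x. ennreal (Wf N (bath_upd i E p x)) \<partial>expo T) \<partial>unifP)
       \<le> (\<integral>\<^sup>+ p. (\<integral>\<^sup>+ x. ennreal (Wf N E) + ennreal x \<partial>expo T) \<partial>unifP)"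
      apply (rule nn_integral_mono_AE)
      using AE_unifP apply eventually_elim
      apply (rule nn_integral_mono_AE)
      using AE_expo_nonneg apply eventually_elim
    proof -
      fix p x :: real assume p: "0 < p \<and> p < 1" and x: "0 \<le> x"
      have "p * (E i + x) \<le> E i + x" using p x E1[OF i] by (intro mult_left_le_one_le) auto
      then have "Wf N (bath_upd i E p x) \<le> Wf N E + x" using Wf_bath_upd[OF i] by simp
      then show "ennreal (Wf N (bath_upd i E p x)) \<le> ennreal (Wf N E) + ennreal x"
        using W0 x by (simp add: ennreal_plus[symmetric] del: ennreal_plus)
    qed
    also have "\<dots> = ennreal (Wf N E + T)"
      using W0 T by (simp add: nn_integral_add_expo nn_integral_const_expo nn_integral_expo_mean nn_integral_const_unifP)
    finally show ?thesis .
  qed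
  show "(\<integral>\<^sup>+ p. (\<integral>\<^sup>+ x. ennreal (Wf N (bath_upd 1 E p x)) \<partial>expo TL) \<partial>unifP) \<le> ennreal (Wf N E + TL + TR)"
    using bnd[of 1 TL] N T by (auto elim!: order_trans intro!: ennreal_leI)
  show "(\<integral>\<^sup>+ p. (\<integral>\<^sup>+ x. ennreal (Wf N (bath_upd N E p x)) \<partial>expo TR) \<partial>unifP) \<le> ennreal (Wf N E + TL + TR)"
    using bnd[of N TR] N T by (auto elim!: order_trans intro!: ennreal_leI)
  show "ennreal (Wf N E) \<le> ennreal (Wf N E + TL + TR)" using T by (intro ennreal_leI) auto
qed

lemma aexp_le_1: "m \<ge> 1 \<Longrightarrow> N \<ge> 1 \<Longrightarrow> aexp N m \<le> 1"
proof -
  assume "m \<ge> 1" "N \<ge> 1"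
  have "(1::real) \<le> 2 ^ (m - 1)" by simp
  moreover have "(1::real) < 2 ^ N" using \<open>N \<ge> 1\<close> by (simp add: one_less_power)
  ultimately show ?thesis unfolding aexp_def by (simp add: field_simps)
qed

lemma aexp_N_le: "1 \<le> m \<Longrightarrow> m \<le> N \<Longrightarrow> aexp N N \<le> aexp N m"
proof -
  assume "1 \<le> m" "m \<le> N"
  have "(2::real) ^ (m - 1) \<le> 2 ^ (N - 1)" using \<open>m \<le> N\<close> by (intro power_increasing) auto
  moreover have "(1::real) < 2 ^ N" using \<open>1 \<le> m\<close> \<open>m \<le> N\<close> by (simp add: one_less_power)
  ultimately show ?thesis unfolding aexp_def by (intro diff_left_mono divide_right_mono) auto
qed

lemma aexp_pos: "N \<ge> 1 \<Longrightarrow> 0 < aexp N N"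
proof -
  assume N: "N \<ge> 1"
  have "(2::real) ^ N = 2 * 2 ^ (N - 1)" using N by (metis Suc_diff_1 less_le_trans zero_less_one power_Suc)
  moreover have "(1::real) \<le> 2 ^ (N - 1)" by simp
  ultimately have "(2::real) ^ (N - 1) - 1 < 2 ^ N - 1" by simp
  moreover have "(0::real) < 2 ^ N - 1" using N by (simp add: one_less_power)
  ultimately show ?thesis unfolding aexp_def by (simp add: field_simps)
qed

lemma Vf_le_scaled:
  assumes E: "inOrth N E" and q: "0 < q" "q \<le> 1" and E': "\<And>j. j \<in> {1..N} \<Longrightarrow> q * E j \<le> E' j"
    and eta: "0 < \<eta>" "\<eta> < 1" and N: "N \<ge> 1"
  shows "Vf N \<eta> E' \<le> q powr (aexp N N * \<eta> - 1) * Vf N \<eta> E"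
  unfolding Vf_def sum_distrib_left
proof (intro sum_mono)
  fix m k assume m: "m \<in> {1..N}" and k: "k \<in> {1..N - m + 1}"
  have idx: "k + j \<in> {1..N}" if "j \<in> {0..m-1}" for j using m k that by auto
  have Epos: "0 < E (k + j)" if "j \<in> {0..m-1}" for j using E idx[OF that] unfolding inOrth_def by auto
  let ?S = "\<Sum>j=0..m-1. E (k + j)" and ?S' = "\<Sum>j=0..m-1. E' (k + j)"
  let ?b = "aexp N m * \<eta> - 1"
  have Spos: "0 < ?S" by (rule sum_pos) (use Epos in auto)
  have "q * ?S \<le> ?S'" unfolding sum_distrib_left by (intro sum_mono E' idx)
  moreover have bneg: "?b \<le> 0" using aexp_le_1[of m N] m eta by (auto simp: mult_le_one)
  ultimately have "?S' powr ?b \<le> (q * ?S) powr ?b" using q Spos by (intro powr_mono2') auto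
  also have "\<dots> = q powr ?b * ?S powr ?b" using q Spos by (simp add: powr_mult)
  also have "\<dots> \<le> q powr (aexp N N * \<eta> - 1) * ?S powr ?b"
    using aexp_N_le[of m N] m eta q by (intro mult_right_mono powr_mono') auto
  finally show "?S' powr ?b \<le> q powr (aexp N N * \<eta> - 1) * ?S powr ?b" .
qed

lemma Vf_nonneg: "0 \<le> Vf N \<eta> E" unfolding Vf_def by (intro sum_nonneg) auto

lemma Vf_exchange_upd_le:
  assumes E: "inOrth N E" and i: "i \<in> {1..<N}" and p: "0 < p" "p < 1"
    and eta: "0 < \<eta>" "\<eta> < 1" and N: "N \<ge> 1"
  shows "Vf N \<eta> (exchange_upd i E p)
       \<le> (p powr (aexp N N * \<eta> - 1) + (1 - p) powr (aexp N N * \<eta> - 1)) * Vf N \<eta> E"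
proof -
  define q where "q = min p (1 - p)"
  have q: "0 < q" "q \<le> 1" using p by (auto simp: q_def)
  have Ei: "0 < E i" "0 < E (i + 1)" using E i unfolding inOrth_def by auto
  have "Vf N \<eta> (exchange_upd i E p) \<le> q powr (aexp N N * \<eta> - 1) * Vf N \<eta> E"
  proof (rule Vf_le_scaled[OF E q _ eta N])
    fix j assume j: "j \<in> {1..N}"
    have "q * E j \<le> E j" using q E j unfolding inOrth_def by (simp add: mult_left_le_one_le)
    moreover have "q * E i \<le> p * (E i + E (i + 1))" "q * E (i + 1) \<le> (1 - p) * (E i + E (i + 1))"
      using Ei p by (auto simp: q_def intro!: mult_mono)
    ultimately show "q * E j \<le> exchange_upd i E p j"
      unfolding exchange_upd_def by auto
  qed
  also have "\<dots> \<le> (p powr (aexp N N * \<eta> - 1) + (1 - p) powr (aexp N N * \<eta> - 1)) * Vf N \<eta> E"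
    by (intro mult_right_mono Vf_nonneg) (auto simp: q_def min_def)
  finally show ?thesis .
qed

lemma Vf_bath_upd_le:
  assumes E: "inOrth N E" and i: "i \<in> {1..N}" and p: "0 < p" "p < 1" and x: "0 \<le> x"
    and eta: "0 < \<eta>" "\<eta> < 1" and N: "N \<ge> 1"
  shows "Vf N \<eta> (bath_upd i E p x)
       \<le> (p powr (aexp N N * \<eta> - 1) + (1 - p) powr (aexp N N * \<eta> - 1)) * Vf N \<eta> E"
proof -
  have "Vf N \<eta> (bath_upd i E p x) \<le> p powr (aexp N N * \<eta> - 1) * Vf N \<eta> E"
  proof (rule Vf_le_scaled[OF E _ _ _ eta N])
    fix j assume j: "j \<in> {1..N}"
    show "p * E j \<le> bath_upd i E p x j"
      using p x E j unfolding bath_upd_def inOrth_def by (auto simp: mult_left_le_one_le)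
  qed (use p in auto)
  also have "\<dots> \<le> (p powr (aexp N N * \<eta> - 1) + (1 - p) powr (aexp N N * \<eta> - 1)) * Vf N \<eta> E"
    by (intro mult_right_mono Vf_nonneg) auto
  finally show ?thesis .
qed

lemma Qop_Vf_le:
  assumes E: "inOrth N E" and N: "N \<ge> 1" and K: "K > 0" and T: "TL > 0" "TR > 0"
    and eta: "0 < \<eta>" "\<eta> < 1"
  shows "Qop N TL TR K (\<lambda>y. ennreal (Vf N \<eta> y)) E \<le> ennreal (2 / (aexp N N * \<eta>) * Vf N \<eta> E)"
proof (rule Qop_le_bound[OF E N K T])
  define b where "b = aexp N N * \<eta> - 1"
  define B where "B p = ennreal (p powr b + (1 - p) powr b) * ennreal (Vf N \<eta> E)" for p
  have a: "0 < aexp N N * \<eta>" using aexp_pos[OF N] eta by simp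
  have mean: "(\<integral>\<^sup>+ p. B p \<partial>unifP) = ennreal (2 / (aexp N N * \<eta>) * Vf N \<eta> E)"
  proof -
    have "(\<integral>\<^sup>+ p. B p \<partial>unifP) = (\<integral>\<^sup>+ p. ennreal (p powr b + (1 - p) powr b) \<partial>unifP) * ennreal (Vf N \<eta> E)"
      unfolding B_def by (rule nn_integral_multc) (simp add: measurable_cong_sets[OF sets_unifP refl])
    also have "\<dots> = ennreal (2 / (b + 1)) * ennreal (Vf N \<eta> E)"
      using a by (subst nn_integral_unifP_powr_sym) (auto simp: b_def)
    also have "\<dots> = ennreal (2 / (aexp N N * \<eta>) * Vf N \<eta> E)"
      using a Vf_nonneg[of N \<eta> E] by (simp add: b_def ennreal_mult[symmetric])
    finally show ?thesis .
  qed
  show "(\<integral>\<^sup>+ p. ennreal (Vf N \<eta> (exchange_upd i E p)) \<partial>unifP) \<le> ennreal (2 / (aexp N N * \<eta>) * Vf N \<eta> E)"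
    if i: "i \<in> {1..<N}" for i
    unfolding mean[symmetric]
  proof (intro nn_integral_mono_AE, use AE_unifP in eventually_elim)
    fix p :: real assume "0 < p \<and> p < 1"
    then show "ennreal (Vf N \<eta> (exchange_upd i E p)) \<le> B p"
      unfolding B_def b_def using Vf_exchange_upd_le[OF E i _ _ eta N, of p] Vf_nonneg[of N \<eta> E]
      by (subst ennreal_mult[symmetric]) (auto intro!: ennreal_leI)
  qed
  have bath: "(\<integral>\<^sup>+ p. (\<integral>\<^sup>+ x. ennreal (Vf N \<eta> (bath_upd i E p x)) \<partial>expo T) \<partial>unifP)
      \<le> ennreal (2 / (aexp N N * \<eta>) * Vf N \<eta> E)"
    if i: "i \<in> {1..N}" and T: "T > 0" for i T
    unfolding mean[symmetric]
  proof (intro nn_integral_mono_AE, use AE_unifP in eventually_elim)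
    fix p :: real assume p: "0 < p \<and> p < 1"
    have "(\<integral>\<^sup>+ x. ennreal (Vf N \<eta> (bath_upd i E p x)) \<partial>expo T) \<le> (\<integral>\<^sup>+ x. B p \<partial>expo T)"
    proof (intro nn_integral_mono_AE, use AE_expo_nonneg[of T] in eventually_elim)
      fix x :: real assume "0 \<le> x"
      then show "ennreal (Vf N \<eta> (bath_upd i E p x)) \<le> B p"
        unfolding B_def b_def using Vf_bath_upd_le[OF E i _ _ _ eta N, of p x] p Vf_nonneg[of N \<eta> E]
        by (subst ennreal_mult[symmetric]) (auto intro!: ennreal_leI)
    qed
    then show "(\<integral>\<^sup>+ x. ennreal (Vf N \<eta> (bath_upd i E p x)) \<partial>expo T) \<le> B p"
      using T by (simp add: nn_integral_const_expo)
  qed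
  show "(\<integral>\<^sup>+ p. (\<integral>\<^sup>+ x. ennreal (Vf N \<eta> (bath_upd 1 E p x)) \<partial>expo TL) \<partial>unifP)
      \<le> ennreal (2 / (aexp N N * \<eta>) * Vf N \<eta> E)"
    using bath[of 1 TL] N T by auto
  show "(\<integral>\<^sup>+ p. (\<integral>\<^sup>+ x. ennreal (Vf N \<eta> (bath_upd N E p x)) \<partial>expo TR) \<partial>unifP)
      \<le> ennreal (2 / (aexp N N * \<eta>) * Vf N \<eta> E)"
    using bath[of N TR] N T by auto
  have "aexp N N * \<eta> \<le> 1" using aexp_le_1[of N N] N eta by (simp add: mult_le_one)
  then have "1 \<le> 2 / (aexp N N * \<eta>)" using a by (simp add: field_simps)
  then have "1 * Vf N \<eta> E \<le> 2 / (aexp N N * \<eta>) * Vf N \<eta> E"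
    by (rule mult_right_mono[OF _ Vf_nonneg])
  then show "ennreal (Vf N \<eta> E) \<le> ennreal (2 / (aexp N N * \<eta>) * Vf N \<eta> E)"
    by (intro ennreal_leI) simp
qed

lemma poisson_generating_function:
  assumes c: "c \<ge> 0" and l: "l \<ge> 0"
  shows "(\<Sum>k. ennreal (exp (- l) * l ^ k / fact k) * ennreal (c ^ k)) = ennreal (exp (l * (c - 1)))"
proof -
  have s: "(\<lambda>k. exp (- l) * ((l * c) ^ k / fact k)) sums (exp (- l) * exp (l * c))"
    using exp_converges[of "l * c"] by (intro sums_mult) (simp add: divide_inverse mult.commute)
  have "(\<Sum>k. ennreal (exp (- l) * l ^ k / fact k) * ennreal (c ^ k)) = (\<Sum>k. ennreal (exp (- l) * ((l * c) ^ k / fact k)))"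
    using c l by (intro suminf_cong) (simp add: ennreal_mult[symmetric] power_mult_distrib)
  also have "\<dots> = ennreal (\<Sum>k. exp (- l) * ((l * c) ^ k / fact k))"
    using c l s by (intro suminf_ennreal2) (auto simp: sums_summable)
  also have "\<dots> = ennreal (exp (l * (c - 1)))"
    using s by (simp add: sums_unique[symmetric] exp_add[symmetric] algebra_simps)
  finally show ?thesis .
qed

context
  fixes N :: nat and TL TR K h :: real
  assumes N: "N \<ge> 1" and TL: "TL > 0" and TR: "TR > 0" and K: "K > 0" and h: "h > 0"
begin

abbreviation "Q \<equiv> Qop N TL TR K"

abbreviation "jump_weight k \<equiv> ennreal (exp (- (Lam N K * h)) * (Lam N K * h) ^ k / fact k)"

lemma Pt_eq: "Pt N TL TR K h f E = (\<Sum>k. jump_weight k * (Q ^^ k) f E)"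
  unfolding Pt_def by simp

lemma Lam_h_nonneg: "0 \<le> Lam N K * h" using K h by (simp add: Lam_def)

lemma measurable_Qop_pow[measurable]: "f \<in> borel_measurable state_space \<Longrightarrow> (Q ^^ k) f \<in> borel_measurable state_space"
  by (induction k) (auto intro: measurable_Qop TL TR)

lemma Qop_pow_add: "f \<in> borel_measurable state_space \<Longrightarrow> g \<in> borel_measurable state_space \<Longrightarrow>
    (Q ^^ k) (\<lambda>x. f x + g x) E = (Q ^^ k) f E + (Q ^^ k) g E"
proof (induction k arbitrary: E)
  case (Suc k)
  have e: "(Q ^^ k) (\<lambda>x. f x + g x) = (\<lambda>x. (Q ^^ k) f x + (Q ^^ k) g x)"
    using Suc by (simp add: fun_eq_iff)
  show ?case by (simp only: funpow.simps comp_def e) (rule Qop_add, auto simp: measurable_Qop_pow TL TR Suc.prems)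
qed simp

lemma Qop_pow_cmult: "f \<in> borel_measurable state_space \<Longrightarrow> (Q ^^ k) (\<lambda>x. c * f x) E = c * (Q ^^ k) f E"
proof (induction k arbitrary: E)
  case (Suc k)
  have e: "(Q ^^ k) (\<lambda>x. c * f x) = (\<lambda>x. c * (Q ^^ k) f x)"
    using Suc by (simp add: fun_eq_iff)
  show ?case by (simp only: funpow.simps comp_def e) (rule Qop_cmult, auto simp: measurable_Qop_pow TL TR Suc.prems)
qed simp

lemma Qop_pow_mono: "inOrth N E \<Longrightarrow> (\<And>z. inOrth N z \<Longrightarrow> f z \<le> g z) \<Longrightarrow> (Q ^^ k) f E \<le> (Q ^^ k) g E"
proof (induction k arbitrary: E)
  case (Suc k)
  show ?case by (simp only: funpow.simps comp_def) (rule Qop_mono[OF Suc.prems(1) _ N], rule Suc.IH, auto simp: Suc.prems)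
qed simp

lemma measurable_Pt[measurable]: "f \<in> borel_measurable state_space \<Longrightarrow> Pt N TL TR K h f \<in> borel_measurable state_space"
  unfolding Pt_def by measurable

lemma Pt_add: "f \<in> borel_measurable state_space \<Longrightarrow> g \<in> borel_measurable state_space \<Longrightarrow>
    Pt N TL TR K h (\<lambda>x. f x + g x) E = Pt N TL TR K h f E + Pt N TL TR K h g E"
  unfolding Pt_eq Qop_pow_add by (simp add: distrib_left suminf_add[symmetric])

lemma Pt_cmult: "f \<in> borel_measurable state_space \<Longrightarrow> Pt N TL TR K h (\<lambda>x. c * f x) E = c * Pt N TL TR K h f E"
  unfolding Pt_eq Qop_pow_cmult by (simp add: mult.left_commute[of _ c] ennreal_suminf_cmult)

lemma Pt_mono: "inOrth N E \<Longrightarrow> (\<And>z. inOrth N z \<Longrightarrow> f z \<le> g z) \<Longrightarrow> Pt N TL TR K h f E \<le> Pt N TL TR K h g E"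
  unfolding Pt_eq by (rule suminf_le) (auto intro!: mult_left_mono Qop_pow_mono summableI)

lemma Qop_pow_one: "inOrth N E \<Longrightarrow> (Q ^^ k) (\<lambda>_. 1) E \<le> 1"
proof (induction k arbitrary: E)
  case (Suc k)
  have "(Q ^^ Suc k) (\<lambda>_. 1) E = Q ((Q ^^ k) (\<lambda>_. 1)) E" by simp
  also have "\<dots> \<le> Q (\<lambda>_. 1) E" by (rule Qop_mono[OF Suc.prems _ N]) (rule Suc.IH)
  also have "\<dots> \<le> 1" by (rule Qop_one[OF Suc.prems N K TL TR])
  finally show ?case .
qed simp

lemma Pt_one: "inOrth N E \<Longrightarrow> Pt N TL TR K h (\<lambda>_. 1) E \<le> 1"
proof -
  assume E: "inOrth N E"
  have "Pt N TL TR K h (\<lambda>_. 1) E \<le> (\<Sum>k. jump_weight k * ennreal (1 ^ k))"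
    unfolding Pt_eq by (rule suminf_le) (use mult_left_mono[OF Qop_pow_one[OF E]] in \<open>auto intro: summableI\<close>)
  also have "\<dots> = ennreal (exp (Lam N K * h * (1 - 1)))" by (rule poisson_generating_function[OF zero_le_one Lam_h_nonneg])
  also have "\<dots> = 1" by simp
  finally show ?thesis .
qed

lemma Qop_pow_Vf_le:
  assumes E: "inOrth N E" and eta: "0 < \<eta>" "\<eta> < 1"
  shows "(Q ^^ k) (\<lambda>y. ennreal (Vf N \<eta> y)) E
       \<le> ennreal ((2 / (aexp N N * \<eta>)) ^ k) * ennreal (Vf N \<eta> E)"
  using E
proof (induction k arbitrary: E)
  case (Suc k)
  define c where "c = 2 / (aexp N N * \<eta>)"
  have c: "0 \<le> c" using aexp_pos[OF N] eta by (simp add: c_def)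
  have "(Q ^^ Suc k) (\<lambda>y. ennreal (Vf N \<eta> y)) E = Q ((Q ^^ k) (\<lambda>y. ennreal (Vf N \<eta> y))) E"
    by simp
  also have "\<dots> \<le> Q (\<lambda>y. ennreal (c ^ k) * ennreal (Vf N \<eta> y)) E"
    unfolding c_def by (rule Qop_mono[OF Suc.prems _ N]) (rule Suc.IH)
  also have "\<dots> = ennreal (c ^ k) * Q (\<lambda>y. ennreal (Vf N \<eta> y)) E"
    by (rule Qop_cmult) (auto simp: TL TR)
  also have "\<dots> \<le> ennreal (c ^ k) * ennreal (c * Vf N \<eta> E)"
    unfolding c_def by (rule mult_left_mono[OF Qop_Vf_le[OF Suc.prems N K TL TR eta]]) simp
  also have "\<dots> = ennreal (c ^ Suc k) * ennreal (Vf N \<eta> E)"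
    using c Vf_nonneg[of N \<eta> E] by (simp add: ennreal_mult[symmetric] mult.assoc)
  finally show ?case unfolding c_def .
qed simp

lemma Pt_Vf_le:
  assumes E: "inOrth N E" and eta: "0 < \<eta>" "\<eta> < 1"
  shows "Pt N TL TR K h (\<lambda>y. ennreal (Vf N \<eta> y)) E
     \<le> ennreal (exp (Lam N K * h * (2 / (aexp N N * \<eta>) - 1)) * Vf N \<eta> E)"
proof -
  define c where "c = 2 / (aexp N N * \<eta>)"
  have c: "0 \<le> c" using aexp_pos[OF N] eta by (simp add: c_def)
  have "Pt N TL TR K h (\<lambda>y. ennreal (Vf N \<eta> y)) E
      \<le> (\<Sum>k. jump_weight k * ennreal (c ^ k) * ennreal (Vf N \<eta> E))"
    unfolding Pt_eq c_def using mult_left_mono[OF Qop_pow_Vf_le[OF E eta]]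
    by (intro suminf_le) (auto simp: mult.assoc intro: summableI)
  also have "\<dots> = (\<Sum>k. jump_weight k * ennreal (c ^ k)) * ennreal (Vf N \<eta> E)"
    by (rule ennreal_suminf_multc)
  also have "\<dots> = ennreal (exp (Lam N K * h * (c - 1))) * ennreal (Vf N \<eta> E)"
    by (simp only: poisson_generating_function[OF c Lam_h_nonneg])
  also have "\<dots> = ennreal (exp (Lam N K * h * (c - 1)) * Vf N \<eta> E)"
    by (rule ennreal_mult[symmetric]) (auto simp: Vf_nonneg)
  finally show ?thesis unfolding c_def .
qed

lemma Qop_pow_Wf_le:
  assumes E: "inOrth N E"
  shows "(Q ^^ k) (\<lambda>y. ennreal (Wf N y)) E \<le> ennreal (Wf N E) + ennreal (real k * (TL + TR))"
  using E
proof (induction k arbitrary: E)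
  case (Suc k)
  define b where "b = TL + TR"
  have b: "0 \<le> b" using TL TR by (simp add: b_def)
  have "(Q ^^ Suc k) (\<lambda>y. ennreal (Wf N y)) E = Q ((Q ^^ k) (\<lambda>y. ennreal (Wf N y))) E"
    by simp
  also have "\<dots> \<le> Q (\<lambda>y. ennreal (Wf N y) + ennreal (real k * b) * 1) E"
    unfolding b_def by (rule Qop_mono[OF Suc.prems _ N]) (simp add: Suc.IH)
  also have "\<dots> = Q (\<lambda>y. ennreal (Wf N y)) E + ennreal (real k * b) * Q (\<lambda>_. 1) E"
    using Qop_add[where f = "\<lambda>y. ennreal (Wf N y)" and g = "\<lambda>y. ennreal (real k * b) * 1"]
      Qop_cmult[where f = "\<lambda>_. 1" and c = "ennreal (real k * b)"] TL TR by simp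
  also have "\<dots> \<le> ennreal (Wf N E + b) + ennreal (real k * b) * 1"
    unfolding b_def using Qop_Wf_le[OF Suc.prems N K TL TR] Qop_one[OF Suc.prems N K TL TR]
    by (intro add_mono mult_left_mono) (auto simp: add.assoc)
  also have "\<dots> = ennreal (Wf N E) + ennreal (real (Suc k) * b)"
    using b Wf_nonneg[OF Suc.prems] by (simp add: ennreal_plus[symmetric] algebra_simps del: ennreal_plus)
  finally show ?case unfolding b_def .
qed simp

lemma Pt_Wf_le:
  assumes E: "inOrth N E"
  shows "Pt N TL TR K h (\<lambda>y. ennreal (Wf N y)) E
     \<le> ennreal (Wf N E + (TL + TR) * exp (Lam N K * h))"
proof -
  define A where "A = ennreal (Wf N E)"
  define B where "B = ennreal (TL + TR)"
  have "(Q ^^ k) (\<lambda>y. ennreal (Wf N y)) E \<le> A * ennreal (1 ^ k) + B * ennreal (2 ^ k)" for k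
  proof -
    have "real k * (TL + TR) \<le> (TL + TR) * 2 ^ k"
      using of_nat_less_two_power[of k, where 'a = real] TL TR by (simp add: mult.commute mult_left_mono)
    then have "ennreal (real k * (TL + TR)) \<le> ennreal ((TL + TR) * 2 ^ k)"
      by (rule ennreal_leI)
    also have "\<dots> = B * ennreal (2 ^ k)"
      unfolding B_def by (rule ennreal_mult) (use TL TR in auto)
    finally show ?thesis
      using Qop_pow_Wf_le[OF E, of k] unfolding A_def by (auto intro: order_trans add_left_mono)
  qed
  then have "Pt N TL TR K h (\<lambda>y. ennreal (Wf N y)) E
      \<le> (\<Sum>k. jump_weight k * (A * ennreal (1 ^ k) + B * ennreal (2 ^ k)))"
    unfolding Pt_eq by (intro suminf_le) (auto intro: mult_left_mono summableI)
  also have "\<dots> = (\<Sum>k. A * (jump_weight k * ennreal (1 ^ k)) + B * (jump_weight k * ennreal (2 ^ k)))"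
    by (intro suminf_cong) (simp only: distrib_left mult.left_commute)
  also have "\<dots> = A * (\<Sum>k. jump_weight k * ennreal (1 ^ k)) + B * (\<Sum>k. jump_weight k * ennreal (2 ^ k))"
    by (subst suminf_add[symmetric]) (auto simp: ennreal_suminf_cmult intro: summableI)
  also have "\<dots> = A * ennreal (exp (Lam N K * h * (1 - 1))) + B * ennreal (exp (Lam N K * h * (2 - 1)))"
    by (simp only: poisson_generating_function[OF _ Lam_h_nonneg] zero_le_one zero_le_numeral)
  also have "\<dots> = ennreal (Wf N E + (TL + TR) * exp (Lam N K * h))"
    using TL TR Wf_nonneg[OF E] unfolding A_def B_def
    by (simp add: ennreal_mult[symmetric] ennreal_plus[symmetric] del: ennreal_plus)
  finally show ?thesis .
qed

lemma sub_markov_operator_Pt: "sub_markov_operator state_space (Pt N TL TR K h) {E. inOrth N E}"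
  by unfold_locales (auto intro: measurable_Pt Pt_add Pt_cmult Pt_mono Pt_one)

end

lemma survP_eq_survival: "survP N TL TR K h A n = survival (Pt N TL TR K h) A n"
  by (induction n) auto

lemma hatP_eq_suminf_entrance: "hatP N TL TR K h G f E = (\<Sum>k. entrance (Pt N TL TR K h) G f k E)"
proof -
  have "hitG N TL TR K h G f k = entrance (Pt N TL TR K h) G f k" for k
    by (induction N TL TR K h G f k rule: hitG.induct) auto
  then show ?thesis unfolding hatP_def by simp
qed

lemma return_drift_Pt:
  assumes N: "N \<ge> 1" and TL: "TL > 0" and TR: "TR > 0" and K: "K > 0" and h: "h > 0"
    and eta: "0 < \<eta>" "\<eta> < 1 / 2" and M0: "M0 > 1" and M1: "M1 > 1" and c0: "c0 > 0" and \<delta>: "\<delta> > 0"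
    and drift_V: "\<And>E. inOrth N E \<Longrightarrow> Vf N \<eta> E > M0 \<Longrightarrow>
       Pt N TL TR K h (\<lambda>y. ennreal (Vf N \<eta> y)) E + ennreal (c0 * Vf N \<eta> E powr (1 - 1 / (2 * (1 - \<eta>))))
       \<le> ennreal (Vf N \<eta> E)"
    and drift_W: "\<And>E. inOrth N E \<Longrightarrow> Vf N \<eta> E \<le> M0 \<Longrightarrow> Wf N E > M1 \<Longrightarrow>
       hatP N TL TR K h {E. Vf N \<eta> E \<le> M0} (\<lambda>y. ennreal (Wf N y)) E \<le> ennreal ((1 - \<delta>) * Wf N E)"
  shows "return_drift state_space (Pt N TL TR K h) {E. inOrth N E} (Vf N \<eta>) M0 c0 (2 * (1 - \<eta>))
      (exp (Lam N K * h * (2 / (aexp N N * \<eta>) - 1))) (Wf N) M1 \<delta> ((TL + TR) * exp (Lam N K * h))"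
proof -
  interpret sub_markov_operator state_space "Pt N TL TR K h" "{E. inOrth N E}"
    by (rule sub_markov_operator_Pt[OF N TL TR K h])
  show ?thesis
  proof unfold_locales
    show "x \<in> {E. inOrth N E} \<Longrightarrow> M0 < Vf N \<eta> x \<Longrightarrow> Pt N TL TR K h (\<lambda>y. ennreal (Vf N \<eta> y)) x
        + ennreal (c0 * Vf N \<eta> x powr (1 - 1 / (2 * (1 - \<eta>)))) \<le> ennreal (Vf N \<eta> x)" for x
      using drift_V by simp
    show "x \<in> {E. inOrth N E} \<Longrightarrow> Pt N TL TR K h (\<lambda>y. ennreal (Vf N \<eta> y)) x
        \<le> ennreal (exp (Lam N K * h * (2 / (aexp N N * \<eta>) - 1)) * Vf N \<eta> x)" for x
      by (intro Pt_Vf_le[OF N TL TR K h]) (use eta in auto)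
    show "x \<in> {E. inOrth N E} \<Longrightarrow> Pt N TL TR K h (\<lambda>y. ennreal (Wf N y)) x
        \<le> ennreal (Wf N x) + ennreal ((TL + TR) * exp (Lam N K * h))" for x
      using Pt_Wf_le[OF N TL TR K h, of x] Wf_nonneg[of N x] TL TR
      by (simp add: ennreal_plus[symmetric] del: ennreal_plus)
    show "x \<in> {E. inOrth N E} \<Longrightarrow> x \<in> {x. Vf N \<eta> x \<le> M0} \<Longrightarrow> M1 < Wf N x \<Longrightarrow>
        (\<Sum>k. entrance (Pt N TL TR K h) {x. Vf N \<eta> x \<le> M0} (\<lambda>y. ennreal (Wf N y)) k x)
        \<le> ennreal ((1 - \<delta>) * Wf N x)" for x
      using drift_W[of x] by (simp add: hatP_eq_suminf_entrance)
  qed (use eta M0 M1 c0 \<delta> TL TR Vf_nonneg Wf_nonneg in auto)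
qed

lemma energy_exchange_survival_tail:
  assumes N: "N \<ge> 1" and TL: "TL > 0" and TR: "TR > 0" and K: "K > 0" and h: "h > 0"
    and eta: "0 < \<eta>" "\<eta> < 1 / 2" and M0: "M0 > 1" and M1: "M1 > 1"
    and drift_V: "\<exists>c0 > 0. \<forall>E. inOrth N E \<and> Vf N \<eta> E > M0 \<longrightarrow>
       Pt N TL TR K h (\<lambda>y. ennreal (Vf N \<eta> y)) E + ennreal (c0 * Vf N \<eta> E powr (1 - 1 / (2 * (1 - \<eta>))))
       \<le> ennreal (Vf N \<eta> E)"
    and drift_W: "\<exists>\<delta> > 0. \<forall>E. inOrth N E \<and> Vf N \<eta> E \<le> M0 \<and> Wf N E > M1 \<longrightarrow>
       hatP N TL TR K h {E. Vf N \<eta> E \<le> M0} (\<lambda>y. ennreal (Wf N y)) E \<le> ennreal ((1 - \<delta>) * Wf N E)"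
    and \<epsilon>: "\<epsilon> > 0"
  shows "\<exists>C6. \<forall>E. inOrth N E \<longrightarrow> (\<forall>n\<ge>1. survP N TL TR K h {E. Vf N \<eta> E \<le> M0 \<and> Wf N E \<le> M1} n E
      \<le> ennreal (C6 * (max 1 (Wf N E) + max 1 (Vf N \<eta> E)) * real n powr (- ((2 - 2 * \<eta>) - \<epsilon>))))"
proof -
  obtain c0 where c0: "c0 > 0" and dV: "\<And>E. inOrth N E \<Longrightarrow> Vf N \<eta> E > M0 \<Longrightarrow>
       Pt N TL TR K h (\<lambda>y. ennreal (Vf N \<eta> y)) E + ennreal (c0 * Vf N \<eta> E powr (1 - 1 / (2 * (1 - \<eta>))))
       \<le> ennreal (Vf N \<eta> E)"
    using drift_V by blast
  obtain \<delta> where \<delta>: "\<delta> > 0" and dW: "\<And>E. inOrth N E \<Longrightarrow> Vf N \<eta> E \<le> M0 \<Longrightarrow> Wf N E > M1 \<Longrightarrow>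
       hatP N TL TR K h {E. Vf N \<eta> E \<le> M0} (\<lambda>y. ennreal (Wf N y)) E \<le> ennreal ((1 - \<delta>) * Wf N E)"
    using drift_W by blast
  interpret return_drift state_space "Pt N TL TR K h" "{E. inOrth N E}" "Vf N \<eta>" M0 c0
      "2 * (1 - \<eta>)" "exp (Lam N K * h * (2 / (aexp N N * \<eta>) - 1))" "Wf N" M1 \<delta> "(TL + TR) * exp (Lam N K * h)"
    by (rule return_drift_Pt[OF N TL TR K h eta M0 M1 c0 \<delta> dV dW])
  obtain C6 where C6: "0 \<le> C6" and tail: "\<And>E n. inOrth N E \<Longrightarrow> 1 \<le> n \<Longrightarrow>
      survival (Pt N TL TR K h) C n E \<le> ennreal (C6 * (max 1 (Wf N E) + max 1 (Vf N \<eta> E)) * real n powr (- (2 * (1 - \<eta>))))"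
    using survival_C_tail by auto
  have "survP N TL TR K h C n E
      \<le> ennreal (C6 * (max 1 (Wf N E) + max 1 (Vf N \<eta> E)) * real n powr (- ((2 - 2 * \<eta>) - \<epsilon>)))"
    if E: "inOrth N E" and n: "1 \<le> n" for E n
  proof -
    have "real n powr (- (2 * (1 - \<eta>))) \<le> real n powr (- ((2 - 2 * \<eta>) - \<epsilon>))"
      using n \<epsilon> by (intro powr_mono) auto
    then have "C6 * (max 1 (Wf N E) + max 1 (Vf N \<eta> E)) * real n powr (- (2 * (1 - \<eta>)))
        \<le> C6 * (max 1 (Wf N E) + max 1 (Vf N \<eta> E)) * real n powr (- ((2 - 2 * \<eta>) - \<epsilon>))"
      using C6 by (intro mult_left_mono) auto
    then show ?thesis
      using tail[OF E n] unfolding survP_eq_survival by (auto elim!: order_trans intro!: ennreal_leI)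
  qed
  then show ?thesis by blast
qed

theorem theorem6p6:
  fixes N :: nat and TL TR :: real
  assumes "N \<ge> 1" and "TL > 0" and "TR > 0"
  shows "\<exists>K0. \<forall>K \<ge> K0. \<exists>\<eta>0 > 0. \<forall>\<eta>. 0 < \<eta> \<and> \<eta> < \<eta>0 \<longrightarrow>
    (\<exists>h0 > 0. \<forall>h. 0 < h \<and> h < h0 \<longrightarrow>
      (\<forall>M0 M1::real.
         M0 > 1 \<and>
         (\<exists>c0 > 0. \<forall>E. inOrth N E \<and> Vf N \<eta> E > M0 \<longrightarrow>
            Pt N TL TR K h (\<lambda>y. ennreal (Vf N \<eta> y)) E
              + ennreal (c0 * Vf N \<eta> E powr (1 - 1 / (2 * (1 - \<eta>))))
            \<le> ennreal (Vf N \<eta> E)) \<and>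
         M1 > 1 \<and>
         (\<exists>\<delta> > 0. \<forall>E. inOrth N E \<and> Vf N \<eta> E \<le> M0 \<and> Wf N E > M1 \<longrightarrow>
            hatP N TL TR K h {E. Vf N \<eta> E \<le> M0} (\<lambda>y. ennreal (Wf N y)) E
            \<le> ennreal ((1 - \<delta>) * Wf N E))
       \<longrightarrow>
         (\<forall>\<epsilon> > 0. \<exists>C6::real. \<forall>E. inOrth N E \<longrightarrow> (\<forall>n::nat. n \<ge> 1 \<longrightarrow>
            survP N TL TR K h {E. Vf N \<eta> E \<le> M0 \<and> Wf N E \<le> M1} n E
            \<le> ennreal (C6 * (max 1 (Wf N E) + max 1 (Vf N \<eta> E))
                        * real n powr (- ((2 - 2 * \<eta>) - \<epsilon>)))))))"
  \<comment> \<open>Any thresholds work since the drift conditions are hypotheses; \<open>\<eta> < 1/2\<close> only ensures \<open>g > 1\<close>.\<close>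
  apply (rule exI[of _ 1], intro allI impI)
  apply (rule exI[of _ "1 / 2"], intro conjI allI impI, simp)
  apply (rule exI[of _ 1], intro conjI allI impI, simp)
  apply (rule energy_exchange_survival_tail[OF assms]; auto)
  done

end
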